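(* Let $K$, $L$, $A$ be as in the context, and suppose there is an $A$-scaffold on $L$ of tolerance $\mathfrak{T}\ge1$ with shift parameters $b_1,\dots,b_n$ (and elements $\lambda_t$, $\Psi_i$). Then $\{\Psi^{(s)}:s\in\mathbb{S}_{p^n}\}$ is a $K$-basis of $A$. Moreover, let $b'$ be any integer with $\mathfrak{a}(b')=p^n-1$ and let $\rho\in L$ with $v_L(\rho)=b'$. Then $L$ is a free $A$-module on the generator $\rho$. Additionally, for each $h\in\mathbb{Z}$, the ring $\mathfrak{A}(h,A)=\{\alpha\in A:\alpha\cdot\mathfrak{P}_L^h\subseteq\mathfrak{P}_L^h\}$ is an $\mathfrak{O}_K$-order in $A$.
   Context: Let $K$ be a field complete with respect to a discrete valuation, with residue field $\kappa$ of characteristic $p>0$ ($\kappa$ need not be perfect; $K$ may have characteristic $0$ or $p$). Let $L/K$ be a totally ramified field extension of degree $p^n$; let $v_K,v_L$ be the normalized valuations ($v_K(K^\times)=v_L(L^\times)=\mathbb{Z}$), $\mathfrak{O}_K,\mathfrak{O}_L$ the valuation rings, $\mathfrak{P}_K,\mathfrak{P}_L$ their maximal ideals. Let $A$ be a $K$-algebra with $\dim_K A=p^n$ acting $K$-linearly on $L$ (making $L$ a left $A$-module), written $\alpha\cdot x$. Let $\mathbb{S}_{p^n}=\{0,\dots,p^n-1\}$; write $s\in\mathbb{S}_{p^n}$ in base $p$ as $s=\sum_{i=1}^n s_{(n-i)}p^{n-i}$ with $s_{(n-i)}\in\{0,\dots,p-1\}$. Given integers $b_1,\dots,b_n$ prime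 to $p$ (shift parameters), put $\mathfrak{b}(s)=\sum_{i=1}^n s_{(n-i)}p^{n-i}b_i$; the map $s\mapsto\mathfrak{b}(s)\bmod p^n$ is a bijection of $\mathbb{S}_{p^n}$, and for $t\in\mathbb{Z}$ let $\mathfrak{a}(t)\in\mathbb{S}_{p^n}$ be the unique element with $\mathfrak{b}(\mathfrak{a}(t))\equiv -t\pmod{p^n}$, with base-$p$ digits $\mathfrak{a}(t)_{(n-i)}$. An $A$-scaffold on $L$ of tolerance $\mathfrak{T}\ge1$ (possibly $\mathfrak{T}=\infty$) with shift parameters $b_1,\dots,b_n$ consists of: (i) elements $\lambda_t\in L$ for $t\in\mathbb{Z}$ with $v_L(\lambda_t)=t$ and $\lambda_{t_1}\lambda_{t_2}^{-1}\in K$ whenever $t_1\equiv t_2\pmod{p^n}$; (ii) elements $\Psi_1,\dots,\Psi_n\in A$ with $\Psi_i\cdot1=0$, such that for each $i$ and each $t\in\mathbb{Z}$ there is a unit $u_{i,t}\in\mathfrak{O}_K^\times$ with $\Psi_i\cdot\lambda_t\equiv u_{i,t}\lambda_{t+p^{n-i}b_i}$ if $\mathfrak{a}(t)_{(n-i)}\ge1$ and $\Psi_i\cdot\lambda_t\equiv0$ if $\mathfrak{a}(t)_{(n-i)}=0$, congruences modulo $\lambda_{t+p^{n-i}b_i}\mathfrak{P}_L^{\mathfrak{T}}$ (equalities if $\mathfrak{T}=\infty$). For $s\in\mathbb{S}_{p^n}$, $\Psi^{(s)}=\Psi_n^{s_{(0)}}\Psi_{n-1}^{s_{(1)}}\cdots\Psi_1^{s_{(n-1)}}$.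 *)

theory Defs
  imports Main "HOL-Library.Extended_Nat" "HOL-Computational_Algebra.Primes"
begin

text \<open>The field L is modelled as a type 'l of class field; K is a subfield given as a subset.
  v is the normalized discrete valuation v_L on L (only meaningful on nonzero elements).\<close>

definition subfield_of :: "'l::field set \<Rightarrow> bool" where
  "subfield_of K \<longleftrightarrow> 0 \<in> K \<and> 1 \<in> K \<and> (\<forall>x\<in>K. \<forall>y\<in>K. x + y \<in> K \<and> x * y \<in> K)
     \<and> (\<forall>x\<in>K. - x \<in> K) \<and> (\<forall>x\<in>K. x \<noteq> 0 \<longrightarrow> inverse x \<in> K)"

definition normalized_discrete_valuation :: "('l::field \<Rightarrow> int) \<Rightarrow> bool" where
  "normalized_discrete_valuation v \<longleftrightarrow>
     (\<forall>x y. x \<noteq> 0 \<longrightarrow> y \<noteq> 0 \<longrightarrow> v (x * y) = v x + v y)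
   \<and> (\<forall>x y. x \<noteq> 0 \<longrightarrow> y \<noteq> 0 \<longrightarrow> x + y \<noteq> 0 \<longrightarrow> v (x + y) \<ge> min (v x) (v y))
   \<and> (\<forall>t. \<exists>x. x \<noteq> 0 \<and> v x = t)"

definition pow_ideal :: "('l::field \<Rightarrow> int) \<Rightarrow> int \<Rightarrow> 'l set" where
  "pow_ideal v h = {x. x = 0 \<or> v x \<ge> h}"

definition val_ring :: "'l::field set \<Rightarrow> ('l \<Rightarrow> int) \<Rightarrow> 'l set" where
  "val_ring K v = K \<inter> pow_ideal v 0"

definition val_units :: "'l::field set \<Rightarrow> ('l \<Rightarrow> int) \<Rightarrow> 'l set" where
  "val_units K v = {x \<in> K. x \<noteq> 0 \<and> v x = 0}"

definition complete_wrt :: "'l::field set \<Rightarrow> ('l \<Rightarrow> int) \<Rightarrow> bool" where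
  "complete_wrt K v \<longleftrightarrow> (\<forall>f::nat \<Rightarrow> 'l. (\<forall>m. f m \<in> K) \<longrightarrow>
      (\<forall>N. \<exists>M. \<forall>m\<ge>M. \<forall>k\<ge>M. f m - f k \<in> pow_ideal v N) \<longrightarrow>
      (\<exists>x\<in>K. \<forall>N. \<exists>M. \<forall>m\<ge>M. f m - x \<in> pow_ideal v N))"

definition basis_over :: "'l::zero set \<Rightarrow> ('l \<Rightarrow> 'b::comm_monoid_add \<Rightarrow> 'b) \<Rightarrow> ('i \<Rightarrow> 'b) \<Rightarrow> 'i set \<Rightarrow> bool" where
  "basis_over K smul e I \<longleftrightarrow> finite I \<and>
     (\<forall>x. \<exists>!c::'i \<Rightarrow> 'l. (\<forall>i\<in>I. c i \<in> K) \<and> (\<forall>i. i \<notin> I \<longrightarrow> c i = 0)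
                         \<and> x = (\<Sum>i\<in>I. smul (c i) (e i)))"

definition K_algebra :: "'l::field set \<Rightarrow> ('l \<Rightarrow> 'a::ring_1) \<Rightarrow> bool" where
  "K_algebra K \<iota> \<longleftrightarrow> \<iota> 1 = 1 \<and> (\<forall>x\<in>K. \<forall>y\<in>K. \<iota> (x + y) = \<iota> x + \<iota> y \<and> \<iota> (x * y) = \<iota> x * \<iota> y)
     \<and> (\<forall>x\<in>K. \<forall>a. \<iota> x * a = a * \<iota> x)"

definition alg_action :: "'l::field set \<Rightarrow> ('l \<Rightarrow> 'a::ring_1) \<Rightarrow> ('a \<Rightarrow> 'l \<Rightarrow> 'l) \<Rightarrow> bool" where
  "alg_action K \<iota> act \<longleftrightarrow>
     (\<forall>a b x. act (a * b) x = act a (act b x)) \<and> (\<forall>x. act 1 x = x)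
   \<and> (\<forall>a b x. act (a + b) x = act a x + act b x) \<and> (\<forall>a x y. act a (x + y) = act a x + act a y)
   \<and> (\<forall>k\<in>K. \<forall>x. act (\<iota> k) x = k * x) \<and> (\<forall>k\<in>K. \<forall>a x. act a (k * x) = k * act a x)"

definition digit :: "nat \<Rightarrow> nat \<Rightarrow> nat \<Rightarrow> nat" where
  "digit p s j = (s div p ^ j) mod p"

definition shift_b :: "nat \<Rightarrow> nat \<Rightarrow> (nat \<Rightarrow> int) \<Rightarrow> nat \<Rightarrow> int" where
  "shift_b p n b s = (\<Sum>i=1..n. int (digit p s (n - i)) * int p ^ (n - i) * b i)"

definition a_fun :: "nat \<Rightarrow> nat \<Rightarrow> (nat \<Rightarrow> int) \<Rightarrow> int \<Rightarrow> nat" where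
  "a_fun p n b t = (THE s. s < p ^ n \<and> shift_b p n b s mod (int p ^ n) = (- t) mod (int p ^ n))"

definition Psi_pow :: "nat \<Rightarrow> nat \<Rightarrow> (nat \<Rightarrow> 'a::monoid_mult) \<Rightarrow> nat \<Rightarrow> 'a" where
  "Psi_pow p n Psi s = prod_list (map (\<lambda>j. Psi (n - j) ^ digit p s j) [0..<n])"

text \<open>x = y modulo lambda_t P_L^T (where v(lambda_t) = t); equality if T = infinity\<close>
definition cong_tol :: "('l::field \<Rightarrow> int) \<Rightarrow> enat \<Rightarrow> int \<Rightarrow> 'l \<Rightarrow> 'l \<Rightarrow> bool" where
  "cong_tol v T t x y \<longleftrightarrow> x = y \<or> (\<exists>T'::nat. T = enat T' \<and> v (x - y) \<ge> t + int T')"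

definition is_scaffold ::
  "'l::field set \<Rightarrow> ('l \<Rightarrow> int) \<Rightarrow> ('a::ring_1 \<Rightarrow> 'l \<Rightarrow> 'l) \<Rightarrow> nat \<Rightarrow> nat \<Rightarrow> (nat \<Rightarrow> int)
    \<Rightarrow> enat \<Rightarrow> (int \<Rightarrow> 'l) \<Rightarrow> (nat \<Rightarrow> 'a) \<Rightarrow> bool" where
  "is_scaffold K v act p n b T lam Psi \<longleftrightarrow>
     T \<ge> 1
   \<and> (\<forall>i\<in>{1..n}. \<not> int p dvd b i)
   \<and> (\<forall>t. lam t \<noteq> 0 \<and> v (lam t) = t)
   \<and> (\<forall>t1 t2. t1 mod (int p ^ n) = t2 mod (int p ^ n) \<longrightarrow> lam t1 * inverse (lam t2) \<in> K)
   \<and> (\<forall>i\<in>{1..n}. act (Psi i) 1 = 0)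
   \<and> (\<forall>i\<in>{1..n}. \<forall>t. \<exists>u\<in>val_units K v.
        (let t' = t + int p ^ (n - i) * b i in
          (if digit p (a_fun p n b t) (n - i) \<ge> 1
           then cong_tol v T t' (act (Psi i) (lam t)) (u * lam t')
           else cong_tol v T t' (act (Psi i) (lam t)) 0)))"

definition assoc_order :: "('a \<Rightarrow> 'l \<Rightarrow> 'l) \<Rightarrow> ('l::field \<Rightarrow> int) \<Rightarrow> int \<Rightarrow> 'a set" where
  "assoc_order act v h = {\<alpha>. \<forall>x\<in>pow_ideal v h. act \<alpha> x \<in> pow_ideal v h}"

definition is_OK_order :: "'l::field set \<Rightarrow> ('l \<Rightarrow> int) \<Rightarrow> ('l \<Rightarrow> 'a::ring_1) \<Rightarrow> 'a set \<Rightarrow> bool" where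
  "is_OK_order K v \<iota> R \<longleftrightarrow>
     0 \<in> R \<and> 1 \<in> R \<and> (\<forall>a\<in>R. \<forall>b\<in>R. a + b \<in> R \<and> a * b \<in> R) \<and> (\<forall>a\<in>R. - a \<in> R)
   \<and> (\<forall>c\<in>val_ring K v. \<forall>a\<in>R. \<iota> c * a \<in> R)
   \<and> (\<exists>F. finite F \<and> F \<subseteq> R \<and>
        R = {\<Sum>f\<in>F. \<iota> (c f) * f | c. \<forall>f\<in>F. c f \<in> val_ring K v})
   \<and> (\<exists>(e::nat \<Rightarrow> 'a) I. basis_over K (\<lambda>k a. \<iota> k * a) e I \<and> e ` I \<subseteq> R)"

end

(*
  Because v(K^x) = p^n Z and v(\<lambda>_t) = t, the elements \<lambda>_0, ..., \<lambda>_{p^n-1} form a K-basis of L in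
  which every K-combination has terms of pairwise distinct valuations. The scaffold congruences
  make \<Psi>_i raise valuations by at least p^(n-i) b_i, and by exactly that much on elements of
  valuation t whenever the (n-i)-th digit of a(t) is nonzero; the shift then lowers that digit by
  one without borrowing. So if a(t) = p^n - 1 and v(x) = t, the valuation of \<Psi>^(s) x is exactly
  t + b(s), and these values are pairwise incongruent modulo p^n because b is a bijection modulo
  p^n. Hence the \<Psi>^(s) x form a K-basis of L: by counting dimensions the \<Psi>^(s) form a K-basis
  of A, and L is free over A on any \<rho> of such a valuation. For the associated order of P^h, testing
  on \<lambda>_{h'} with h' >= h and a(h') = p^n - 1 bounds the valuations of the coordinates of its
  elements from below, so it is a bounded, hence finitely generated, O_K-lattice; suitable K-multiples
  of the \<Psi>^(s) lie in it.
*)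

theory Submission
  imports Defs
begin

section \<open>Valuations\<close>

locale discrete_valuation =
  fixes v :: "'l::field \<Rightarrow> int"
  assumes val: "normalized_discrete_valuation v"
begin

lemma v_mult: "x \<noteq> 0 \<Longrightarrow> y \<noteq> 0 \<Longrightarrow> v (x * y) = v x + v y"
  using val unfolding normalized_discrete_valuation_def by blast

lemma v_add: "x \<noteq> 0 \<Longrightarrow> y \<noteq> 0 \<Longrightarrow> x + y \<noteq> 0 \<Longrightarrow> v (x + y) \<ge> min (v x) (v y)"
  using val unfolding normalized_discrete_valuation_def by blast

lemma v_one: "v 1 = 0"
  using v_mult[of 1 1] by simp

lemma v_uminus: "v (- x) = v x"
proof (cases "x = 0")
  case False
  have "v (-1) = 0" using v_mult[of "-1" "-1"] v_one by simp
  then show ?thesis using v_mult[of "-1" x] False by simp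
qed simp

lemma v_inverse: "x \<noteq> 0 \<Longrightarrow> v (inverse x) = - v x"
  using v_mult[of x "inverse x"] v_one by simp

lemma v_divide: "x \<noteq> 0 \<Longrightarrow> y \<noteq> 0 \<Longrightarrow> v (x / y) = v x - v y"
  by (simp add: divide_inverse v_mult v_inverse)

lemma pow_ideal_0 [simp]: "0 \<in> pow_ideal v m"
  by (simp add: pow_ideal_def)

lemma pow_ideal_mono: "x \<in> pow_ideal v m \<Longrightarrow> m' \<le> m \<Longrightarrow> x \<in> pow_ideal v m'"
  by (auto simp: pow_ideal_def)

lemma pow_ideal_add: "x \<in> pow_ideal v m \<Longrightarrow> y \<in> pow_ideal v m \<Longrightarrow> x + y \<in> pow_ideal v m"
  using v_add[of x y] by (fastforce simp: pow_ideal_def)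

lemma pow_ideal_uminus: "x \<in> pow_ideal v m \<Longrightarrow> - x \<in> pow_ideal v m"
  by (auto simp: pow_ideal_def v_uminus)

lemma pow_ideal_mult: "x \<in> pow_ideal v m \<Longrightarrow> y \<in> pow_ideal v k \<Longrightarrow> x * y \<in> pow_ideal v (m + k)"
  by (cases "x = 0 \<or> y = 0") (auto simp: pow_ideal_def v_mult)

lemma pow_ideal_sum: "(\<And>i. i \<in> I \<Longrightarrow> f i \<in> pow_ideal v m) \<Longrightarrow> (\<Sum>i\<in>I. f i) \<in> pow_ideal v m"
  by (induction I rule: infinite_finite_induct) (auto intro: pow_ideal_add)

lemma v_add_higher:
  assumes x: "x \<noteq> 0" and y: "y \<in> pow_ideal v (v x + 1)"
  shows "x + y \<noteq> 0 \<and> v (x + y) = v x"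
proof (cases "y = 0")
  case False
  then have vy: "v y > v x" using y by (simp add: pow_ideal_def)
  have ne: "x + y \<noteq> 0"
  proof
    assume "x + y = 0"
    then have "y = - x" by (simp add: add_eq_0_iff)
    then show False using vy v_uminus[of x] by simp
  qed
  have "v (x + y) \<ge> v x" using v_add[OF x False ne] vy by simp
  moreover have "v x \<ge> min (v (x + y)) (v (- y))"
    using v_add[of "x + y" "- y"] ne False x by simp
  ultimately show ?thesis using ne vy v_uminus[of y] by auto
qed (use x in simp)

lemma v_sum_distinct_vals:
  assumes "finite S" "S \<noteq> {}" "\<And>i. i \<in> S \<Longrightarrow> f i \<noteq> 0" "inj_on (\<lambda>i. v (f i)) S"
  shows "(\<Sum>i\<in>S. f i) \<noteq> 0 \<and> v (\<Sum>i\<in>S. f i) = Min ((\<lambda>i. v (f i)) ` S)"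
  using assms
proof (induction S rule: finite_ne_induct)
  case (insert x F)
  let ?s = "\<Sum>i\<in>F. f i" and ?m = "Min ((\<lambda>i. v (f i)) ` F)"
  have IH: "?s \<noteq> 0 \<and> v ?s = ?m"
    using insert by (auto simp: inj_on_insert)
  have "?m \<in> (\<lambda>i. v (f i)) ` F"
    using insert by (intro Min_in) auto
  then obtain y where "y \<in> F" "?m = v (f y)" by blast
  then have ne: "v (f x) \<noteq> ?m"
    using insert.prems(2) insert.hyps(3) by (auto simp: inj_on_def)
  have fx: "f x \<noteq> 0" using insert by auto
  have Min_insert: "Min ((\<lambda>i. v (f i)) ` insert x F) = min (v (f x)) ?m"
    using insert by simp
  show ?case
  proof (cases "v (f x) < v ?s")
    case True
    then have "?s \<in> pow_ideal v (v (f x) + 1)" by (simp add: pow_ideal_def)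
    from v_add_higher[OF fx this] show ?thesis using insert Min_insert True IH by simp
  next
    case False
    then have lt: "v ?s < v (f x)" using ne IH by simp
    then have "f x \<in> pow_ideal v (v ?s + 1)" by (simp add: pow_ideal_def)
    from v_add_higher[OF _ this] IH have "?s + f x \<noteq> 0 \<and> v (?s + f x) = v ?s" by blast
    then show ?thesis using insert Min_insert lt IH by (simp add: add.commute)
  qed
qed simp

lemma sum_distinct_vals_pow_idealD:
  assumes fin: "finite I"
    and dist: "\<And>i j. i \<in> I \<Longrightarrow> j \<in> I \<Longrightarrow> f i \<noteq> 0 \<Longrightarrow> f j \<noteq> 0 \<Longrightarrow> v (f i) = v (f j) \<Longrightarrow> i = j"
    and sum: "(\<Sum>i\<in>I. f i) \<in> pow_ideal v m" and i: "i \<in> I"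
  shows "f i \<in> pow_ideal v m"
proof (cases "f i = 0")
  case False
  let ?S = "{i\<in>I. f i \<noteq> 0}"
  have "(\<Sum>i\<in>I. f i) = (\<Sum>i\<in>?S. f i)"
    using fin by (intro sum.mono_neutral_right) auto
  moreover have "inj_on (\<lambda>i. v (f i)) ?S" using dist by (auto simp: inj_on_def)
  then have "(\<Sum>i\<in>?S. f i) \<noteq> 0 \<and> v (\<Sum>i\<in>?S. f i) = Min ((\<lambda>i. v (f i)) ` ?S)"
    using fin False i by (intro v_sum_distinct_vals) auto
  moreover have "Min ((\<lambda>i. v (f i)) ` ?S) \<le> v (f i)" using fin False i by (intro Min_le) auto
  ultimately show ?thesis using sum by (auto simp: pow_ideal_def)
qed simp

lemma sum_distinct_vals_eq_0D:
  assumes "finite I"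
    and "\<And>i j. i \<in> I \<Longrightarrow> j \<in> I \<Longrightarrow> f i \<noteq> 0 \<Longrightarrow> f j \<noteq> 0 \<Longrightarrow> v (f i) = v (f j) \<Longrightarrow> i = j"
    and "(\<Sum>i\<in>I. f i) = 0" "i \<in> I"
  shows "f i = 0"
proof (rule ccontr)
  assume "f i \<noteq> 0"
  moreover have "f i \<in> pow_ideal v (v (f i) + 1)"
    using sum_distinct_vals_pow_idealD[OF assms(1,2)] assms(3,4) by simp
  ultimately show False by (simp add: pow_ideal_def)
qed

end

section \<open>Linear algebra over a subfield\<close>

context
  fixes K :: "'l::field set"
  assumes K: "subfield_of K"
begin

lemma subfield_0: "0 \<in> K" and subfield_1: "1 \<in> K"
  and subfield_add: "x \<in> K \<Longrightarrow> y \<in> K \<Longrightarrow> x + y \<in> K"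
  and subfield_mult: "x \<in> K \<Longrightarrow> y \<in> K \<Longrightarrow> x * y \<in> K"
  and subfield_uminus: "x \<in> K \<Longrightarrow> - x \<in> K"
  and subfield_inverse: "x \<in> K \<Longrightarrow> inverse x \<in> K"
  using K unfolding subfield_of_def by (auto simp: inverse_eq_divide)

lemma subfield_diff: "x \<in> K \<Longrightarrow> y \<in> K \<Longrightarrow> x - y \<in> K"
  using subfield_add subfield_uminus by (metis diff_conv_add_uminus)

lemma subfield_divide: "x \<in> K \<Longrightarrow> y \<in> K \<Longrightarrow> x / y \<in> K"
  using subfield_mult subfield_inverse by (metis divide_inverse)

lemma subfield_sum: "(\<And>i. i \<in> I \<Longrightarrow> f i \<in> K) \<Longrightarrow> (\<Sum>i\<in>I. f i) \<in> K"
  by (induction I rule: infinite_finite_induct) (auto intro: subfield_0 subfield_add)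

lemma homogeneous_system_nontrivial_solution:
  fixes a :: "'i \<Rightarrow> 'j \<Rightarrow> 'l"
  assumes "finite E" "finite F" "card E < card F" "\<forall>i\<in>F. \<forall>j\<in>E. a i j \<in> K"
  shows "\<exists>c. (\<forall>i\<in>F. c i \<in> K) \<and> (\<exists>i\<in>F. c i \<noteq> 0) \<and> (\<forall>j\<in>E. (\<Sum>i\<in>F. c i * a i j) = 0)"
  using assms
proof (induction E arbitrary: F a rule: finite_induct)
  case empty
  then obtain i0 where "i0 \<in> F" by fastforce
  then show ?case
    by (intro exI[of _ "\<lambda>i. if i = i0 then 1 else 0"]) (auto intro: subfield_0 subfield_1)
next
  case (insert e E)
  show ?case
  proof (cases "\<forall>i\<in>F. a i e = 0")
    case True
    with insert.IH[of F a] insert.prems insert.hyps show ?thesis by auto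
  next
    case False
    then obtain i0 where i0: "i0 \<in> F" "a i0 e \<noteq> 0" by blast
    define F' where "F' = F - {i0}"
    define r where "r i = a i e / a i0 e" for i
    define a' where "a' i j = a i j - r i * a i0 j" for i j
    have F: "F = insert i0 F'" "i0 \<notin> F'" "finite F'"
      using i0 insert.prems by (auto simp: F'_def)
    have rK: "r i \<in> K" if "i \<in> F" for i
      using insert.prems that i0 by (auto simp: r_def intro!: subfield_divide)
    have "\<forall>i\<in>F'. \<forall>j\<in>E. a' i j \<in> K"
      using insert.prems rK F by (auto simp: a'_def intro!: subfield_diff subfield_mult)
    moreover have "card E < card F'"
      using insert.prems insert.hyps F by simp
    ultimately obtain c where c: "\<forall>i\<in>F'. c i \<in> K" "\<exists>i\<in>F'. c i \<noteq> 0"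
      "\<forall>j\<in>E. (\<Sum>i\<in>F'. c i * a' i j) = 0"
      using insert.IH[of F' a'] F by blast
    define c' where "c' = c(i0 := - (\<Sum>k\<in>F'. c k * r k))"
    have elim: "(\<Sum>i\<in>F. c' i * a i j) = (\<Sum>i\<in>F'. c i * a' i j)" for j
    proof -
      have "(\<Sum>i\<in>F'. c' i * a i j) = (\<Sum>i\<in>F'. c i * a' i j + c i * r i * a i0 j)"
        using F by (intro sum.cong) (auto simp: c'_def a'_def algebra_simps)
      then show ?thesis
        using F by (simp add: c'_def sum.distrib sum_distrib_right)
    qed
    have "(\<Sum>k\<in>F'. c k * r k) \<in> K"
      using c(1) rK F by (intro subfield_sum subfield_mult) auto
    then have "\<forall>i\<in>F. c' i \<in> K" using c(1) F by (auto simp: c'_def intro: subfield_uminus)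
    moreover have "\<exists>i\<in>F. c' i \<noteq> 0" using c(2) F by (auto simp: c'_def)
    moreover have "a' i e = 0" for i using i0 by (simp add: a'_def r_def)
    then have "\<forall>j\<in>insert e E. (\<Sum>i\<in>F. c' i * a i j) = 0" using elim c(3) by simp
    ultimately show ?thesis by blast
  qed
qed

end

definition subfield_module :: "'l::field set \<Rightarrow> ('l \<Rightarrow> 'b::ab_group_add \<Rightarrow> 'b) \<Rightarrow> bool" where
  "subfield_module K smul \<longleftrightarrow>
     (\<forall>a\<in>K. \<forall>b\<in>K. \<forall>x. smul (a + b) x = smul a x + smul b x \<and> smul (a * b) x = smul a (smul b x))
   \<and> (\<forall>a\<in>K. \<forall>x y. smul a (x + y) = smul a x + smul a y) \<and> (\<forall>x. smul 1 x = x)"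

definition lin_indep :: "'l::field set \<Rightarrow> ('l \<Rightarrow> 'b::ab_group_add \<Rightarrow> 'b) \<Rightarrow> ('i \<Rightarrow> 'b) \<Rightarrow> 'i set \<Rightarrow> bool" where
  "lin_indep K smul f I \<longleftrightarrow>
     (\<forall>c. (\<forall>i\<in>I. c i \<in> K) \<longrightarrow> (\<Sum>i\<in>I. smul (c i) (f i)) = 0 \<longrightarrow> (\<forall>i\<in>I. c i = 0))"

context
  fixes K :: "'l::field set" and smul :: "'l \<Rightarrow> 'b::ab_group_add \<Rightarrow> 'b"
  assumes K: "subfield_of K" and module: "subfield_module K smul"
begin

lemma smul_add_left: "a \<in> K \<Longrightarrow> b \<in> K \<Longrightarrow> smul (a + b) x = smul a x + smul b x"
  and smul_mult: "a \<in> K \<Longrightarrow> b \<in> K \<Longrightarrow> smul (a * b) x = smul a (smul b x)"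
  and smul_add_right: "a \<in> K \<Longrightarrow> smul a (x + y) = smul a x + smul a y"
  and smul_one: "smul 1 x = x"
  using module by (simp_all add: subfield_module_def)

lemma smul_zero_left: "smul 0 x = 0"
  using smul_add_left[of 0 0 x] subfield_0[OF K] by simp

lemma smul_zero_right: "a \<in> K \<Longrightarrow> smul a 0 = 0"
  using smul_add_right[of a 0 0] by simp

lemma smul_diff_left: "a \<in> K \<Longrightarrow> b \<in> K \<Longrightarrow> smul (a - b) x = smul a x - smul b x"
  using smul_add_left[of "a - b" b x] subfield_diff[OF K] by (simp add: eq_diff_eq)

lemma smul_uminus_left: "a \<in> K \<Longrightarrow> smul (- a) x = - smul a x"
  using smul_diff_left[of 0 a x] subfield_0[OF K] by (simp add: smul_zero_left)

lemma smul_sum_left: "(\<And>i. i \<in> I \<Longrightarrow> c i \<in> K) \<Longrightarrow> smul (\<Sum>i\<in>I. c i) x = (\<Sum>i\<in>I. smul (c i) x)"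
  by (induction I rule: infinite_finite_induct)
    (auto simp: smul_zero_left smul_add_left subfield_sum[OF K])

lemma smul_sum_right: "a \<in> K \<Longrightarrow> smul a (\<Sum>i\<in>I. f i) = (\<Sum>i\<in>I. smul a (f i))"
  by (induction I rule: infinite_finite_induct) (auto simp: smul_zero_right smul_add_right)

lemma combination_of_combinations:
  assumes "finite E" "\<forall>i\<in>F. \<forall>j\<in>E. a i j \<in> K" "\<forall>i\<in>F. c i \<in> K"
  shows "(\<Sum>i\<in>F. smul (c i) (\<Sum>j\<in>E. smul (a i j) (e j))) = (\<Sum>j\<in>E. smul (\<Sum>i\<in>F. c i * a i j) (e j))"
proof -
  have "(\<Sum>i\<in>F. smul (c i) (\<Sum>j\<in>E. smul (a i j) (e j))) = (\<Sum>i\<in>F. \<Sum>j\<in>E. smul (c i * a i j) (e j))"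
    using assms by (intro sum.cong refl) (simp add: smul_sum_right smul_mult)
  also have "\<dots> = (\<Sum>j\<in>E. \<Sum>i\<in>F. smul (c i * a i j) (e j))" by (rule sum.swap)
  also have "\<dots> = (\<Sum>j\<in>E. smul (\<Sum>i\<in>F. c i * a i j) (e j))"
    using assms by (intro sum.cong refl) (simp add: smul_sum_left subfield_mult[OF K])
  finally show ?thesis .
qed

lemma basis_over_represent:
  assumes "basis_over K smul e I"
  obtains c where "\<forall>i\<in>I. c i \<in> K" "\<forall>i. i \<notin> I \<longrightarrow> c i = 0" "x = (\<Sum>i\<in>I. smul (c i) (e i))"
  using assms unfolding basis_over_def by blast

lemma lin_indep_coeffs_unique:
  assumes "lin_indep K smul f I" "\<forall>i\<in>I. c i \<in> K" "\<forall>i\<in>I. d i \<in> K"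
    and "(\<Sum>i\<in>I. smul (c i) (f i)) = (\<Sum>i\<in>I. smul (d i) (f i))"
  shows "\<forall>i\<in>I. c i = d i"
proof -
  have "(\<Sum>i\<in>I. smul (c i - d i) (f i)) = 0"
    using assms(2-4) by (simp add: smul_diff_left sum_subtractf)
  moreover have "\<forall>i\<in>I. c i - d i \<in> K" using assms(2,3) subfield_diff[OF K] by blast
  ultimately have "\<forall>i\<in>I. c i - d i = 0"
    using assms(1)[unfolded lin_indep_def, rule_format, of "\<lambda>i. c i - d i"] by blast
  then show ?thesis by simp
qed

lemma basis_over_unique:
  assumes "basis_over K smul e I"
    and "\<forall>i\<in>I. c i \<in> K" "\<forall>i. i \<notin> I \<longrightarrow> c i = 0" "\<forall>i\<in>I. d i \<in> K" "\<forall>i. i \<notin> I \<longrightarrow> d i = 0"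
    and "(\<Sum>i\<in>I. smul (c i) (e i)) = (\<Sum>i\<in>I. smul (d i) (e i))"
  shows "c = d"
proof -
  let ?P = "\<lambda>c. (\<forall>i\<in>I. c i \<in> K) \<and> (\<forall>i. i \<notin> I \<longrightarrow> c i = 0)
               \<and> (\<Sum>i\<in>I. smul (d i) (e i)) = (\<Sum>i\<in>I. smul (c i) (e i))"
  have "\<exists>!c. ?P c" using assms(1) unfolding basis_over_def by blast
  moreover have "?P c" "?P d" using assms(2-6) by simp_all
  ultimately show ?thesis by blast
qed

lemma basis_over_lin_indep:
  assumes B: "basis_over K smul e I"
  shows "lin_indep K smul e I"
  unfolding lin_indep_def
proof (intro allI impI)
  fix c assume c: "\<forall>i\<in>I. c i \<in> K" and sum: "(\<Sum>i\<in>I. smul (c i) (e i)) = 0"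
  define c' where "c' j = (if j \<in> I then c j else 0)" for j
  have "(\<Sum>i\<in>I. smul (c' i) (e i)) = (\<Sum>i\<in>I. smul (c i) (e i))"
    by (rule sum.cong) (simp_all add: c'_def)
  also have "\<dots> = (\<Sum>i\<in>I. smul 0 (e i))" by (simp add: sum smul_zero_left)
  finally have "c' = (\<lambda>_. 0)"
    using basis_over_unique[OF B, of c' "\<lambda>_. 0"] c subfield_0[OF K] by (simp add: c'_def)
  then show "\<forall>i\<in>I. c i = 0" by (metis c'_def)
qed

lemma lin_dependent_if_card_gt:
  assumes B: "basis_over K smul e E" and "finite F" "card E < card F"
  shows "\<exists>c. (\<forall>i\<in>F. c i \<in> K) \<and> (\<exists>i\<in>F. c i \<noteq> 0) \<and> (\<Sum>i\<in>F. smul (c i) (f i)) = 0"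
proof -
  have finE: "finite E" using B by (simp add: basis_over_def)
  have "\<forall>i. \<exists>a. (\<forall>j\<in>E. a j \<in> K) \<and> f i = (\<Sum>j\<in>E. smul (a j) (e j))"
    by (metis basis_over_represent[OF B])
  then obtain a where a: "\<And>i. (\<forall>j\<in>E. a i j \<in> K) \<and> f i = (\<Sum>j\<in>E. smul (a i j) (e j))"
    by metis
  then have aK: "\<forall>i\<in>F. \<forall>j\<in>E. a i j \<in> K" and f: "\<And>i. f i = (\<Sum>j\<in>E. smul (a i j) (e j))"
    by simp_all
  obtain c where c: "\<forall>i\<in>F. c i \<in> K" "\<exists>i\<in>F. c i \<noteq> 0" "\<forall>j\<in>E. (\<Sum>i\<in>F. c i * a i j) = 0"
    using homogeneous_system_nontrivial_solution[OF K finE assms(2,3) aK] by blast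
  have "(\<Sum>i\<in>F. smul (c i) (f i)) = (\<Sum>j\<in>E. smul (\<Sum>i\<in>F. c i * a i j) (e j))"
    unfolding f by (rule combination_of_combinations[OF finE aK c(1)])
  also have "\<dots> = 0" using c(3) by (simp add: smul_zero_left)
  finally show ?thesis using c by blast
qed

text \<open>N independent vectors span a space with a basis of N elements: adjoining any x gives a
  dependent family, in which x must have a nonzero coefficient.\<close>

lemma lin_indep_spans:
  fixes N :: nat
  assumes B: "basis_over K smul e {..<N}" and I: "lin_indep K smul f {..<N}"
  obtains d where "\<forall>i\<in>{..<N}. d i \<in> K" "x = (\<Sum>i\<in>{..<N}. smul (d i) (f i))"
proof -
  obtain c where c: "\<forall>i\<in>{..<Suc N}. c i \<in> K" "\<exists>i\<in>{..<Suc N}. c i \<noteq> 0"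
    "(\<Sum>i\<in>{..<Suc N}. smul (c i) ((f(N := x)) i)) = 0"
    using lin_dependent_if_card_gt[OF B, of "{..<Suc N}" "f(N := x)"] by auto
  then have rel: "(\<Sum>i<N. smul (c i) (f i)) + smul (c N) x = 0" by simp
  have cK: "\<forall>i\<in>{..<N}. c i \<in> K" "c N \<in> K" using c(1) by auto
  have cN: "c N \<noteq> 0"
  proof
    assume "c N = 0"
    then have "\<forall>i\<in>{..<N}. c i = 0"
      using rel I cK(1) smul_zero_left unfolding lin_indep_def by simp
    then show False using c(2) \<open>c N = 0\<close> by (auto simp: less_Suc_eq)
  qed
  have iK: "inverse (c N) \<in> K" using cK(2) by (rule subfield_inverse[OF K])
  define d where "d i = inverse (c N) * - c i" for i
  have "x = smul (inverse (c N)) (smul (c N) x)"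
    using cN smul_mult[OF iK cK(2), of x] by (simp add: smul_one)
  also have "smul (c N) x = (\<Sum>i<N. smul (- c i) (f i))"
    using rel cK(1) by (simp add: smul_uminus_left sum_negf eq_neg_iff_add_eq_0 add.commute)
  also have "smul (inverse (c N)) \<dots> = (\<Sum>i\<in>{..<N}. smul (d i) (f i))"
    unfolding smul_sum_right[OF iK]
    using smul_mult[OF iK subfield_uminus[OF K]] cK(1) by (simp add: d_def)
  finally have "x = (\<Sum>i\<in>{..<N}. smul (d i) (f i))" .
  moreover have "\<forall>i\<in>{..<N}. d i \<in> K"
    using cK iK by (auto simp: d_def intro: subfield_mult[OF K] subfield_uminus[OF K])
  ultimately show ?thesis using that by blast
qed

lemma lin_indep_basis_over:
  fixes N :: nat
  assumes B: "basis_over K smul e {..<N}" and I: "lin_indep K smul f {..<N}"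
  shows "basis_over K smul f {..<N}"
  unfolding basis_over_def
proof (intro conjI finite_lessThan allI)
  fix x
  obtain d where dK: "\<forall>i\<in>{..<N}. d i \<in> K" and x: "x = (\<Sum>i\<in>{..<N}. smul (d i) (f i))"
    by (rule lin_indep_spans[OF B I])
  let ?d = "\<lambda>i. if i < N then d i else 0"
  show "\<exists>!c. (\<forall>i\<in>{..<N}. c i \<in> K) \<and> (\<forall>i. i \<notin> {..<N} \<longrightarrow> c i = 0)
      \<and> x = (\<Sum>i\<in>{..<N}. smul (c i) (f i))"
  proof (rule ex1I[of _ ?d])
    fix c assume "(\<forall>i\<in>{..<N}. c i \<in> K) \<and> (\<forall>i. i \<notin> {..<N} \<longrightarrow> c i = 0)
      \<and> x = (\<Sum>i\<in>{..<N}. smul (c i) (f i))"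
    with lin_indep_coeffs_unique[OF I _ dK, of c] x show "c = ?d" by auto
  qed (use dK x in auto)
qed

lemma basis_over_rescale:
  fixes N :: nat
  assumes B: "basis_over K smul e {..<N}" and k: "\<forall>i<N. k i \<in> K \<and> k i \<noteq> 0"
  shows "basis_over K smul (\<lambda>i. smul (k i) (e i)) {..<N}"
proof -
  have "lin_indep K smul (\<lambda>i. smul (k i) (e i)) {..<N}"
    unfolding lin_indep_def
  proof (intro allI impI ballI)
    fix c i assume c: "\<forall>i\<in>{..<N}. c i \<in> K"
      and sum: "(\<Sum>i\<in>{..<N}. smul (c i) (smul (k i) (e i))) = 0" and i: "i \<in> {..<N}"
    have "(\<Sum>i\<in>{..<N}. smul (c i * k i) (e i)) = 0"
      using sum c k by (simp add: smul_mult)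
    moreover have "\<forall>i\<in>{..<N}. c i * k i \<in> K" using c k by (auto intro: subfield_mult[OF K])
    ultimately have "c i * k i = 0"
      using basis_over_lin_indep[OF B, unfolded lin_indep_def, rule_format, of "\<lambda>i. c i * k i"] i
      by blast
    then show "c i = 0" using k i by simp
  qed
  then show ?thesis by (rule lin_indep_basis_over[OF B])
qed

end

text \<open>Coordinates with respect to e; meaningful only when e is a basis over I.\<close>

definition coord :: "'l::zero set \<Rightarrow> ('l \<Rightarrow> 'b::comm_monoid_add \<Rightarrow> 'b) \<Rightarrow> ('i \<Rightarrow> 'b) \<Rightarrow> 'i set \<Rightarrow> 'b \<Rightarrow> 'i \<Rightarrow> 'l" where
  "coord K smul e I x = (THE c. (\<forall>i\<in>I. c i \<in> K) \<and> (\<forall>i. i \<notin> I \<longrightarrow> c i = 0)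
                                 \<and> x = (\<Sum>i\<in>I. smul (c i) (e i)))"

context
  fixes K :: "'l::field set" and smul :: "'l \<Rightarrow> 'b::ab_group_add \<Rightarrow> 'b"
    and e :: "'i \<Rightarrow> 'b" and I :: "'i set"
  assumes K: "subfield_of K" and module: "subfield_module K smul" and B: "basis_over K smul e I"
begin

lemma coord_spec:
  "(\<forall>i\<in>I. coord K smul e I x i \<in> K) \<and> (\<forall>i. i \<notin> I \<longrightarrow> coord K smul e I x i = 0)
    \<and> x = (\<Sum>i\<in>I. smul (coord K smul e I x i) (e i))"
proof -
  have "\<exists>!c. (\<forall>i\<in>I. c i \<in> K) \<and> (\<forall>i. i \<notin> I \<longrightarrow> c i = 0) \<and> x = (\<Sum>i\<in>I. smul (c i) (e i))"
    using B unfolding basis_over_def by blast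
  then show ?thesis unfolding coord_def by (rule theI')
qed

lemma coord_in_subfield: "coord K smul e I x i \<in> K"
  using coord_spec[of x] subfield_0[OF K] by (cases "i \<in> I") auto

lemma coord_eqI:
  assumes "\<forall>i\<in>I. c i \<in> K" "\<forall>i. i \<notin> I \<longrightarrow> c i = 0" "x = (\<Sum>i\<in>I. smul (c i) (e i))"
  shows "coord K smul e I x = c"
  using coord_spec[of x] assms by (intro basis_over_unique[OF K module B]) auto

lemma coord_add: "coord K smul e I (x + y) i = coord K smul e I x i + coord K smul e I y i"
proof -
  have "x + y = (\<Sum>i\<in>I. smul (coord K smul e I x i + coord K smul e I y i) (e i))"
    using coord_spec[of x] coord_spec[of y]
    by (simp add: smul_add_left[OF K module] coord_in_subfield sum.distrib)
  then have "coord K smul e I (x + y) = (\<lambda>i. coord K smul e I x i + coord K smul e I y i)"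
    using coord_spec[of x] coord_spec[of y]
    by (intro coord_eqI) (auto intro: subfield_add[OF K])
  then show ?thesis by simp
qed

lemma coord_smul: "a \<in> K \<Longrightarrow> coord K smul e I (smul a x) i = a * coord K smul e I x i"
proof -
  assume a: "a \<in> K"
  have "smul a x = smul a (\<Sum>i\<in>I. smul (coord K smul e I x i) (e i))"
    using coord_spec[of x] by (rule arg_cong[OF conjunct2[OF conjunct2]])
  also have "\<dots> = (\<Sum>i\<in>I. smul (a * coord K smul e I x i) (e i))"
    unfolding smul_sum_right[OF K module a]
    using smul_mult[OF K module a coord_in_subfield] by simp
  finally have "smul a x = (\<Sum>i\<in>I. smul (a * coord K smul e I x i) (e i))" .
  then have "coord K smul e I (smul a x) = (\<lambda>i. a * coord K smul e I x i)"
    using coord_spec[of x] a by (intro coord_eqI) (auto intro: subfield_mult[OF K])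
  then show ?thesis by simp
qed

lemma coord_0: "coord K smul e I 0 = (\<lambda>_. 0)"
  using subfield_0[OF K] by (intro coord_eqI) (auto simp: smul_zero_left[OF K module])

lemma coord_eq_0_imp_eq_0: "\<forall>i\<in>I. coord K smul e I x i = 0 \<Longrightarrow> x = 0"
  using coord_spec[of x] by (simp add: smul_zero_left[OF K module])

end

section \<open>Lattices over the valuation ring\<close>

definition O_span :: "'l::field set \<Rightarrow> ('l \<Rightarrow> int) \<Rightarrow> ('l \<Rightarrow> 'b::comm_monoid_add \<Rightarrow> 'b) \<Rightarrow> 'b set \<Rightarrow> 'b set" where
  "O_span K v smul F = {\<Sum>f\<in>F. smul (c f) f | c. \<forall>f\<in>F. c f \<in> val_ring K v}"

lemma O_span_insert:
  assumes "finite F" "g \<notin> F" "y \<in> O_span K v smul F" "r \<in> val_ring K v"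
  shows "y + smul r g \<in> O_span K v smul (insert g F)"
proof -
  obtain c where c: "\<forall>f\<in>F. c f \<in> val_ring K v" "y = (\<Sum>f\<in>F. smul (c f) f)"
    using assms(3) unfolding O_span_def by blast
  have "(\<Sum>f\<in>F. smul ((c(g := r)) f) f) = y"
    using c(2) assms(2) by (auto intro: sum.cong)
  then have "y + smul r g = (\<Sum>f\<in>insert g F. smul ((c(g := r)) f) f)"
    using assms(1,2) by (simp add: add.commute)
  then show ?thesis using c(1) assms(4) unfolding O_span_def by force
qed

context discrete_valuation
begin

context
  fixes K :: "'l set" and smul :: "'l \<Rightarrow> 'b::ab_group_add \<Rightarrow> 'b" and M :: "'b set"
  assumes K: "subfield_of K" and module: "subfield_module K smul"
    and M_0: "0 \<in> M" and M_add: "\<And>x y. x \<in> M \<Longrightarrow> y \<in> M \<Longrightarrow> x + y \<in> M"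
    and M_smul: "\<And>c x. c \<in> val_ring K v \<Longrightarrow> x \<in> M \<Longrightarrow> smul c x \<in> M"
begin

lemma O_span_subset: "F \<subseteq> M \<Longrightarrow> O_span K v smul F \<subseteq> M"
proof -
  have "F \<subseteq> M \<Longrightarrow> (\<forall>f\<in>F. c f \<in> val_ring K v) \<Longrightarrow> (\<Sum>f\<in>F. smul (c f) f) \<in> M" for F c
    by (induction F rule: infinite_finite_induct) (auto intro: M_0 M_add M_smul)
  then show "F \<subseteq> M \<Longrightarrow> O_span K v smul F \<subseteq> M" unfolding O_span_def by blast
qed

text \<open>One step of the Hermite normal form over the valuation ring: a generator whose j-th
  coordinate has least valuation (it exists because the valuations are bounded below) clears
  the j-th coordinate of every element of M.\<close>

lemma O_span_insert_generator:
  assumes B: "basis_over K smul e I" and j: "j \<in> I"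
    and bound: "\<And>x. x \<in> M \<Longrightarrow> coord K smul e I x j \<noteq> 0 \<Longrightarrow> L \<le> v (coord K smul e I x j)"
    and F': "finite F'" "F' \<subseteq> {x \<in> M. coord K smul e I x j = 0}"
      "{x \<in> M. coord K smul e I x j = 0} = O_span K v smul F'"
  shows "\<exists>F. finite F \<and> F \<subseteq> M \<and> M = O_span K v smul F"
proof (cases "\<exists>x\<in>M. coord K smul e I x j \<noteq> 0")
  case False
  then show ?thesis using F' by auto
next
  case True
  let ?co = "\<lambda>x. coord K smul e I x j"
  obtain g where g: "g \<in> M" "?co g \<noteq> 0"
    and g_min: "\<And>x. x \<in> M \<Longrightarrow> ?co x \<noteq> 0 \<Longrightarrow> nat (v (?co g) - L) \<le> nat (v (?co x) - L)"
    using ex_has_least_nat[of "\<lambda>x. x \<in> M \<and> ?co x \<noteq> 0" _ "\<lambda>x. nat (v (?co x) - L)"] True by blast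
  have g_min': "v (?co g) \<le> v (?co x)" if "x \<in> M" "?co x \<noteq> 0" for x
    using g_min[OF that] bound[OF that] bound[OF g] by linarith
  have "g \<notin> F'" using F' g by auto
  have "M \<subseteq> O_span K v smul (insert g F')"
  proof
    fix x assume x: "x \<in> M"
    define r where "r = ?co x / ?co g"
    have rK: "r \<in> K" unfolding r_def by (intro subfield_divide[OF K] coord_in_subfield[OF K module B])
    have "r \<in> pow_ideal v 0"
      using g_min'[OF x] g(2) v_divide by (cases "?co x = 0") (auto simp: r_def pow_ideal_def)
    then have r: "r \<in> val_ring K v" "- r \<in> val_ring K v"
      using rK subfield_uminus[OF K] pow_ideal_uminus by (auto simp: val_ring_def)
    define y where "y = x + smul (- r) g"
    have "y \<in> M" using x g r M_add M_smul by (simp add: y_def)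
    moreover have "?co y = 0"
      using g(2) r(1) by (simp add: y_def coord_add[OF K module B] coord_smul[OF K module B]
          subfield_uminus[OF K] val_ring_def r_def)
    ultimately have "y \<in> O_span K v smul F'" using F'(3) by blast
    moreover have "x = y + smul r g"
      using r by (simp add: y_def smul_uminus_left[OF K module] val_ring_def)
    ultimately show "x \<in> O_span K v smul (insert g F')"
      using O_span_insert[OF F'(1) \<open>g \<notin> F'\<close> _ r(1)] by simp
  qed
  moreover have "O_span K v smul (insert g F') \<subseteq> M" using F'(2) g by (intro O_span_subset) auto
  ultimately show ?thesis using F'(1,2) g by (intro exI[of _ "insert g F'"]) auto
qed

end

lemma bounded_lattice_finitely_generated:
  fixes N :: nat and L :: "nat \<Rightarrow> int"
  assumes K: "subfield_of K" and module: "subfield_module K smul" and B: "basis_over K smul e {..<N}"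
    and M_0: "0 \<in> M" and M_add: "\<And>x y. x \<in> M \<Longrightarrow> y \<in> M \<Longrightarrow> x + y \<in> M"
    and M_smul: "\<And>c x. c \<in> val_ring K v \<Longrightarrow> x \<in> M \<Longrightarrow> smul c x \<in> M"
    and bound: "\<And>x j. x \<in> M \<Longrightarrow> j < N \<Longrightarrow> coord K smul e {..<N} x j \<noteq> 0
                  \<Longrightarrow> L j \<le> v (coord K smul e {..<N} x j)"
  shows "\<exists>F. finite F \<and> F \<subseteq> M \<and> M = O_span K v smul F"
proof -
  let ?co = "coord K smul e {..<N}"
  define M' where "M' m = {x \<in> M. \<forall>s<m. ?co x s = 0}" for m
  have M'_0: "0 \<in> M' m" for m
    using M_0 by (simp add: M'_def coord_0[OF K module B])
  have M'_add: "x + y \<in> M' m" if "x \<in> M' m" "y \<in> M' m" for x y m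
    using that M_add by (simp add: M'_def coord_add[OF K module B])
  have M'_smul: "smul c x \<in> M' m" if "c \<in> val_ring K v" "x \<in> M' m" for c x m
    using that M_smul by (simp add: M'_def coord_smul[OF K module B] val_ring_def)
  have "\<exists>F. finite F \<and> F \<subseteq> M' (N - k) \<and> M' (N - k) = O_span K v smul F" if "k \<le> N" for k
    using that
  proof (induction k)
    case 0
    have "M' N = {0}"
      using M'_0 coord_eq_0_imp_eq_0[OF K module B] by (auto simp: M'_def)
    moreover have "O_span K v smul {} = {0}" by (simp add: O_span_def)
    ultimately show ?case by auto
  next
    case (Suc k)
    let ?m = "N - Suc k"
    have "s < N - k \<longleftrightarrow> s < ?m \<or> s = ?m" for s using Suc.prems by auto
    then have next_eq: "{x \<in> M' ?m. ?co x ?m = 0} = M' (N - k)"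
      by (auto simp: M'_def)
    obtain F' where "finite F'" "F' \<subseteq> M' (N - k)" "M' (N - k) = O_span K v smul F'"
      using Suc by auto
    then show ?case
      using O_span_insert_generator[OF K module M'_0 M'_add M'_smul B, where j = ?m and L = "L ?m" and F' = F'] Suc.prems
        bound next_eq by (auto simp: M'_def)
  qed
  from this[of N] show ?thesis by (simp add: M'_def)
qed

end

section \<open>Base-p digits and the shift map\<close>

lemma digit_Suc: "digit p s (Suc j) = digit p (s div p) j"
  by (simp add: digit_def div_mult2_eq mult.commute)

lemma digit_less: "p > 0 \<Longrightarrow> digit p s j < p"
  by (simp add: digit_def)

lemma sum_digits: "p > 1 \<Longrightarrow> s < p ^ n \<Longrightarrow> (\<Sum>j<n. digit p s j * p ^ j) = s"
proof (induction n arbitrary: s)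
  case (Suc n)
  have "s div p < p ^ n" using Suc.prems by (simp add: less_mult_imp_div_less mult.commute)
  then have IH: "(\<Sum>j<n. digit p (s div p) j * p ^ j) = s div p" using Suc.IH Suc.prems(1) by blast
  have "(\<Sum>j<Suc n. digit p s j * p ^ j) = digit p s 0 + p * (\<Sum>j<n. digit p (s div p) j * p ^ j)"
    by (simp add: sum.lessThan_Suc_shift digit_Suc sum_distrib_left algebra_simps
        del: sum.lessThan_Suc)
  also have "\<dots> = s mod p + p * (s div p)" by (simp only: IH) (simp add: digit_def)
  finally show ?case by simp
qed simp

lemma sum_digits_less: "(p::nat) > 0 \<Longrightarrow> \<forall>j<n. d j < p \<Longrightarrow> (\<Sum>j<n. d j * p ^ j) < p ^ n"
proof (induction n)
  case (Suc n)
  have "(\<Sum>j<Suc n. d j * p ^ j) < p ^ n + d n * p ^ n" using Suc by simp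
  also have "\<dots> \<le> p * p ^ n"
    using Suc.prems(2) mult_right_mono[of "d n + 1" p "p ^ n"] by (simp add: Suc_le_eq)
  finally show ?case by simp
qed simp

lemma digit_sum_digits: "p > 1 \<Longrightarrow> \<forall>j<n. d j < p \<Longrightarrow> k < n \<Longrightarrow> digit p (\<Sum>j<n. d j * p ^ j) k = d k"
proof (induction n arbitrary: d k)
  case (Suc n)
  have eq: "(\<Sum>j<Suc n. d j * p ^ j) = d 0 + p * (\<Sum>j<n. d (Suc j) * p ^ j)"
    by (simp add: sum.lessThan_Suc_shift sum_distrib_left algebra_simps del: sum.lessThan_Suc)
  have d0: "d 0 < p" using Suc.prems by simp
  show ?case
  proof (cases k)
    case 0 then show ?thesis using eq d0 by (simp add: digit_def)
  next
    case (Suc k')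
    then show ?thesis using Suc.IH[of "\<lambda>j. d (Suc j)" k'] Suc.prems eq d0 by (simp add: digit_Suc)
  qed
qed simp

lemma digit_power_minus_1: "p > 1 \<Longrightarrow> j < n \<Longrightarrow> digit p (p ^ n - 1) j = p - 1"
proof -
  assume p: "p > 1" and j: "j < n"
  have "(\<Sum>j<n. (p - 1) * p ^ j) = p ^ n - 1"
  proof (induction n)
    case (Suc n)
    have "p ^ n \<ge> 1" "p ^ n \<le> p * p ^ n" using p by simp_all
    moreover have "(p - 1) * p ^ n = p * p ^ n - p ^ n" by (simp add: diff_mult_distrib)
    ultimately show ?case using Suc by simp
  qed simp
  then show ?thesis using digit_sum_digits[of p n "\<lambda>_. p - 1" j] p j by simp
qed

text \<open>The shift map on arbitrary digit vectors (shift_b is its restriction to base-p digits),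
  which lets us subtract digits without borrowing.\<close>

definition digit_shift :: "nat \<Rightarrow> nat \<Rightarrow> (nat \<Rightarrow> int) \<Rightarrow> (nat \<Rightarrow> nat) \<Rightarrow> int" where
  "digit_shift p n b d = (\<Sum>j<n. int (d j) * int p ^ j * b (n - j))"

lemma shift_b_eq_digit_shift: "shift_b p n b s = digit_shift p n b (digit p s)"
  unfolding shift_b_def digit_shift_def
  by (rule sum.reindex_bij_witness[of _ "\<lambda>j. n - j" "\<lambda>i. n - i"]) auto

lemma digit_shift_cong: "(\<And>j. j < n \<Longrightarrow> d j = d' j) \<Longrightarrow> digit_shift p n b d = digit_shift p n b d'"
  by (simp add: digit_shift_def)

lemma digit_shift_add: "digit_shift p n b (\<lambda>j. d j + d' j) = digit_shift p n b d + digit_shift p n b d'"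
  by (simp add: digit_shift_def sum.distrib algebra_simps)

lemma digit_shift_diff:
  "(\<And>j. j < n \<Longrightarrow> d j \<le> d' j) \<Longrightarrow> digit_shift p n b (\<lambda>j. d' j - d j) = digit_shift p n b d' - digit_shift p n b d"
  using digit_shift_add[of p n b d "\<lambda>j. d' j - d j"] digit_shift_cong[of n "\<lambda>j. d j + (d' j - d j)" d']
  by simp

lemma digit_shift_single: "j < n \<Longrightarrow> digit_shift p n b (\<lambda>i. if i = j then k else 0) = int k * int p ^ j * b (n - j)"
proof -
  assume "j < n"
  have "digit_shift p n b (\<lambda>i. if i = j then k else 0)
      = (\<Sum>i<n. if i = j then int k * int p ^ i * b (n - i) else 0)"
    unfolding digit_shift_def by (intro sum.cong) auto
  then show ?thesis using \<open>j < n\<close> by simp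
qed

context
  fixes p n :: nat and b :: "nat \<Rightarrow> int"
  assumes prime_p: "prime p" and b_coprime: "\<forall>i\<in>{1..n}. \<not> int p dvd b i"
begin

lemma p_gt_1: "p > 1"
  using prime_p prime_gt_1_nat by blast

text \<open>Since each b_i is prime to p, the digits can be read off from the shift modulo p^n, lowest
  digit first.\<close>

lemma digit_shift_cong_imp_eq:
  assumes d: "\<forall>j<n. d j < p" and d': "\<forall>j<n. d' j < p"
    and cong: "digit_shift p n b d mod (int p ^ n) = digit_shift p n b d' mod (int p ^ n)"
  shows "\<forall>j<n. d j = d' j"
proof (rule ccontr)
  assume "\<not> (\<forall>j<n. d j = d' j)"
  then have ex: "\<exists>j. j < n \<and> d j \<noteq> d' j" by blast
  define j0 where "j0 = (LEAST j. j < n \<and> d j \<noteq> d' j)"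
  have j0: "j0 < n" "d j0 \<noteq> d' j0" using LeastI_ex[OF ex] by (auto simp: j0_def)
  have below: "j < j0 \<Longrightarrow> d j = d' j" for j
    using not_less_Least[of j "\<lambda>j. j < n \<and> d j \<noteq> d' j"] j0(1) by (auto simp: j0_def)
  define \<delta> where "\<delta> j = int (d j) - int (d' j)" for j
  define t where "t j = \<delta> j * int p ^ j * b (n - j)" for j
  have "int p ^ n dvd (\<Sum>j<n. t j)"
    using cong by (simp add: mod_eq_dvd_iff digit_shift_def t_def \<delta>_def sum_subtractf left_diff_distrib)
  then have "int p ^ Suc j0 dvd (\<Sum>j<n. t j)"
    using j0(1) by (meson Suc_leI dvd_trans le_imp_power_dvd)
  moreover have "int p ^ Suc j0 dvd t j" if "j \<in> {..<n} - {j0}" for j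
  proof (cases "j < j0")
    case False
    then have "int p ^ Suc j0 dvd int p ^ j" using that by (intro le_imp_power_dvd) auto
    then show ?thesis by (simp add: t_def)
  qed (simp add: t_def \<delta>_def below)
  then have "int p ^ Suc j0 dvd (\<Sum>j\<in>{..<n} - {j0}. t j)" by (rule dvd_sum)
  moreover have "(\<Sum>j<n. t j) = t j0 + (\<Sum>j\<in>{..<n} - {j0}. t j)"
    using j0(1) by (simp add: sum.remove)
  ultimately have "int p ^ j0 * int p dvd int p ^ j0 * (\<delta> j0 * b (n - j0))"
    by (metis dvd_add_left_iff power_Suc2 t_def mult.commute mult.left_commute)
  then have "int p dvd \<delta> j0 * b (n - j0)" using p_gt_1 by simp
  then have "int p dvd \<delta> j0" using b_coprime j0(1) prime_p by (simp add: prime_dvd_mult_iff)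
  moreover have "\<bar>\<delta> j0\<bar> < int p"
    using d[rule_format, OF j0(1)] d'[rule_format, OF j0(1)] unfolding \<delta>_def by linarith
  ultimately have "\<delta> j0 = 0" by (metis dvd_imp_le_int abs_of_nat not_less)
  then show False using j0(2) by (simp add: \<delta>_def)
qed

lemma shift_b_cong_imp_eq:
  assumes "s < p ^ n" "s' < p ^ n" "shift_b p n b s mod (int p ^ n) = shift_b p n b s' mod (int p ^ n)"
  shows "s = s'"
proof -
  have "\<forall>j<n. digit p s j = digit p s' j"
    using digit_shift_cong_imp_eq[of "digit p s" "digit p s'"] assms p_gt_1
    by (simp add: digit_less shift_b_eq_digit_shift)
  then have "(\<Sum>j<n. digit p s j * p ^ j) = (\<Sum>j<n. digit p s' j * p ^ j)" by simp
  then show ?thesis by (simp only: sum_digits[OF p_gt_1 assms(1)] sum_digits[OF p_gt_1 assms(2)])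
qed

lemma shift_b_surj: "\<exists>s<p ^ n. shift_b p n b s mod (int p ^ n) = r mod (int p ^ n)"
proof -
  let ?f = "\<lambda>s. shift_b p n b s mod (int p ^ n)"
  have pos: "int p ^ n > 0" using p_gt_1 by simp
  have "inj_on ?f {..<p ^ n}" by (meson inj_onI lessThan_iff shift_b_cong_imp_eq)
  then have "card (?f ` {..<p ^ n}) = card {0..<int p ^ n}"
    by (simp add: card_image flip: of_nat_power)
  moreover have "?f ` {..<p ^ n} \<subseteq> {0..<int p ^ n}"
    using pos by (simp add: image_subset_iff)
  ultimately have "?f ` {..<p ^ n} = {0..<int p ^ n}" by (intro card_subset_eq) simp_all
  moreover have "r mod (int p ^ n) \<in> {0..<int p ^ n}" using pos by simp
  ultimately have "r mod (int p ^ n) \<in> ?f ` {..<p ^ n}" by simp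
  then show ?thesis by (auto simp: eq_commute)
qed

lemma a_fun_spec:
  "a_fun p n b t < p ^ n \<and> shift_b p n b (a_fun p n b t) mod (int p ^ n) = (- t) mod (int p ^ n)"
proof -
  obtain s where s: "s < p ^ n" "shift_b p n b s mod (int p ^ n) = (- t) mod (int p ^ n)"
    using shift_b_surj[of "- t"] by blast
  have "\<exists>!s. s < p ^ n \<and> shift_b p n b s mod (int p ^ n) = (- t) mod (int p ^ n)"
    using s shift_b_cong_imp_eq by (intro ex1I[of _ s]) auto
  then show ?thesis unfolding a_fun_def by (rule theI')
qed

lemma a_fun_eqI:
  "s < p ^ n \<Longrightarrow> shift_b p n b s mod (int p ^ n) = (- t) mod (int p ^ n) \<Longrightarrow> a_fun p n b t = s"
  using a_fun_spec[of t] shift_b_cong_imp_eq[of "a_fun p n b t" s] by simp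

lemma digit_a_fun_add_digit_shift:
  assumes le: "\<forall>j<n. d j \<le> digit p (a_fun p n b t) j" and j: "j < n"
  shows "digit p (a_fun p n b (t + digit_shift p n b d)) j = digit p (a_fun p n b t) j - d j"
proof -
  let ?a = "digit p (a_fun p n b t)"
  define s where "s = (\<Sum>j<n. (?a j - d j) * p ^ j)"
  have less_p: "\<forall>j<n. ?a j - d j < p"
    using p_gt_1 by (simp add: digit_less less_imp_diff_less)
  have digit_s: "\<forall>j<n. digit p s j = ?a j - d j"
    unfolding s_def using digit_sum_digits[OF p_gt_1 less_p] by blast
  have "s < p ^ n" unfolding s_def using p_gt_1 less_p by (intro sum_digits_less) auto
  have "shift_b p n b s = digit_shift p n b (\<lambda>j. ?a j - d j)"
    unfolding shift_b_eq_digit_shift by (rule digit_shift_cong) (simp add: digit_s)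
  also have "\<dots> = digit_shift p n b ?a - digit_shift p n b d"
    by (rule digit_shift_diff) (simp add: le)
  finally have "shift_b p n b s mod (int p ^ n) = (digit_shift p n b ?a - digit_shift p n b d) mod (int p ^ n)"
    by simp
  also have "\<dots> = (- t - digit_shift p n b d) mod (int p ^ n)"
    using a_fun_spec[of t] by (intro mod_diff_cong) (simp_all add: shift_b_eq_digit_shift)
  finally have "a_fun p n b (t + digit_shift p n b d) = s"
    using \<open>s < p ^ n\<close> by (intro a_fun_eqI) (simp_all add: algebra_simps)
  then show ?thesis using digit_s j by simp
qed

lemma a_fun_eq_top_above: "\<exists>h'. h' \<ge> h \<and> a_fun p n b h' = p ^ n - 1"
proof -
  define t0 where "t0 = - shift_b p n b (p ^ n - 1)"
  define h' where "h' = h + (t0 - h) mod (int p ^ n)"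
  have "h' mod (int p ^ n) = t0 mod (int p ^ n)"
    unfolding h'_def by (simp add: mod_add_right_eq)
  then have "(- h') mod (int p ^ n) = shift_b p n b (p ^ n - 1) mod (int p ^ n)"
    by (metis mod_minus_cong minus_minus t0_def)
  then have "a_fun p n b h' = p ^ n - 1" using p_gt_1 by (intro a_fun_eqI) auto
  moreover have "h' \<ge> h" using p_gt_1 by (simp add: h'_def)
  ultimately show ?thesis by blast
qed

end

section \<open>Scaffolds\<close>

locale scaffold_setting = discrete_valuation v
  for v :: "'l::field \<Rightarrow> int" +
  fixes K :: "'l set" and \<iota> :: "'l \<Rightarrow> 'a::ring_1" and act :: "'a \<Rightarrow> 'l \<Rightarrow> 'l"
    and p n :: nat and b :: "nat \<Rightarrow> int" and T :: enat
    and lam :: "int \<Rightarrow> 'l" and Psi :: "nat \<Rightarrow> 'a"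
  assumes prime_p: "prime p"
    and K_subfield: "subfield_of K"
    and degree: "\<exists>e::nat \<Rightarrow> 'l. basis_over K (*) e {..<p ^ n}"
    and totally_ramified: "{v x | x. x \<in> K \<and> x \<noteq> 0} = {int p ^ n * z | z. True}"
    and A_alg: "K_algebra K \<iota>"
    and A_dim: "\<exists>e::nat \<Rightarrow> 'a. basis_over K (\<lambda>k a. \<iota> k * a) e {..<p ^ n}"
    and action: "alg_action K \<iota> act"
    and scaffold: "is_scaffold K v act p n b T lam Psi"
begin

abbreviation P :: "int \<Rightarrow> 'l set" where "P \<equiv> pow_ideal v"

lemma b_coprime: "\<forall>i\<in>{1..n}. \<not> int p dvd b i"
  and tolerance: "T \<ge> 1"
  and lam_nonzero: "lam t \<noteq> 0"
  and v_lam: "v (lam t) = t"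
  and lam_quotient_in_K: "t1 mod (int p ^ n) = t2 mod (int p ^ n) \<Longrightarrow> lam t1 * inverse (lam t2) \<in> K"
  using scaffold by (simp_all add: is_scaffold_def)

lemmas p_gt_1 = p_gt_1[OF prime_p b_coprime]
  and shift_b_cong_imp_eq = shift_b_cong_imp_eq[OF prime_p b_coprime]
  and digit_a_fun_add_digit_shift = digit_a_fun_add_digit_shift[OF prime_p b_coprime]
  and a_fun_eq_top_above = a_fun_eq_top_above[OF prime_p b_coprime]

lemma unit_iff: "u \<in> val_units K v \<longleftrightarrow> u \<in> K \<and> u \<noteq> 0 \<and> v u = 0"
  by (simp add: val_units_def)

lemma act_mult: "act (\<alpha> * \<beta>) x = act \<alpha> (act \<beta> x)"
  and act_one: "act 1 x = x"
  and act_add_left: "act (\<alpha> + \<beta>) x = act \<alpha> x + act \<beta> x"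
  and act_add_right: "act \<alpha> (x + y) = act \<alpha> x + act \<alpha> y"
  and act_iota: "k \<in> K \<Longrightarrow> act (\<iota> k) x = k * x"
  and act_scalar: "k \<in> K \<Longrightarrow> act \<alpha> (k * x) = k * act \<alpha> x"
  using action unfolding alg_action_def by blast+

lemma act_zero_left: "act 0 x = 0"
  using act_add_left[of 0 0 x] by (metis add_0 add_cancel_right_right)

lemma act_zero_right: "act \<alpha> 0 = 0"
  using act_add_right[of \<alpha> 0 0] by (metis add_0 add_cancel_right_right)

lemma act_uminus_left: "act (- \<alpha>) x = - act \<alpha> x"
proof -
  have "act \<alpha> x + act (- \<alpha>) x = 0" using act_add_left[of \<alpha> "- \<alpha>" x] by (simp add: act_zero_left)
  then show ?thesis by (simp add: add_eq_0_iff)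
qed

lemma act_sum_left: "act (\<Sum>i\<in>I. f i) x = (\<Sum>i\<in>I. act (f i) x)"
  by (induction I rule: infinite_finite_induct) (auto simp: act_zero_left act_add_left)

lemma act_sum_right: "act \<alpha> (\<Sum>i\<in>I. f i) = (\<Sum>i\<in>I. act \<alpha> (f i))"
  by (induction I rule: infinite_finite_induct) (auto simp: act_zero_right act_add_right)

lemma act_combination: "\<forall>i\<in>I. c i \<in> K \<Longrightarrow> act (\<Sum>i\<in>I. \<iota> (c i) * f i) x = (\<Sum>i\<in>I. c i * act (f i) x)"
  by (simp add: act_sum_left act_mult act_iota)

lemma iota_add: "x \<in> K \<Longrightarrow> y \<in> K \<Longrightarrow> \<iota> (x + y) = \<iota> x + \<iota> y"
  and iota_mult: "x \<in> K \<Longrightarrow> y \<in> K \<Longrightarrow> \<iota> (x * y) = \<iota> x * \<iota> y"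
  and iota_one: "\<iota> 1 = 1"
  using A_alg unfolding K_algebra_def by blast+

lemma module_L: "subfield_module K ((*) :: 'l \<Rightarrow> 'l \<Rightarrow> 'l)"
  by (simp add: subfield_module_def algebra_simps)

lemma module_A: "subfield_module K (\<lambda>k \<alpha>. \<iota> k * \<alpha>)"
  by (simp add: subfield_module_def iota_add iota_mult iota_one algebra_simps)

lemma v_K_dvd: "k \<in> K \<Longrightarrow> k \<noteq> 0 \<Longrightarrow> int p ^ n dvd v k"
proof -
  assume "k \<in> K" "k \<noteq> 0"
  then have "v k \<in> {int p ^ n * z | z. True}" unfolding totally_ramified[symmetric] by blast
  then show ?thesis by auto
qed

lemma exists_K_val: "\<exists>k\<in>K. k \<noteq> 0 \<and> v k = int p ^ n * z"
proof -
  have "int p ^ n * z \<in> {v x | x. x \<in> K \<and> x \<noteq> 0}" unfolding totally_ramified by blast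
  then show ?thesis by auto
qed

lemma units_mult: "u \<in> val_units K v \<Longrightarrow> w \<in> val_units K v \<Longrightarrow> u * w \<in> val_units K v"
  by (simp add: unit_iff v_mult subfield_mult[OF K_subfield])

lemma unit_mult_lam: "u \<in> val_units K v \<Longrightarrow> u * lam t \<noteq> 0 \<and> v (u * lam t) = t"
  by (simp add: unit_iff v_mult lam_nonzero v_lam)

text \<open>The quotient \<lambda>_t / \<lambda>_{v c + t} lies in K because v c is a multiple of p^n.\<close>

lemma K_mult_lam:
  assumes c: "c \<in> K" "c \<noteq> 0"
  shows "\<exists>u\<in>val_units K v. c * lam t = u * lam (v c + t)"
proof -
  let ?t = "v c + t"
  have "t mod (int p ^ n) = ?t mod (int p ^ n)"
    using v_K_dvd[OF c] by (auto elim!: dvdE)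
  then have q: "lam t * inverse (lam ?t) \<in> K" by (rule lam_quotient_in_K)
  define u where "u = c * (lam t * inverse (lam ?t))"
  have "u \<in> K" using c q by (simp add: u_def subfield_mult[OF K_subfield])
  moreover have "u \<noteq> 0" "v u = 0"
    using c lam_nonzero by (simp_all add: u_def v_mult v_inverse v_lam)
  moreover have "c * lam t = u * lam ?t" using lam_nonzero by (simp add: u_def)
  ultimately show ?thesis by (auto simp: unit_iff)
qed

text \<open>K-multiples of elements whose valuations are pairwise incongruent modulo p^n have pairwise
  distinct valuations, because valuations on K are multiples of p^n.\<close>

definition incongruent_vals :: "('i \<Rightarrow> 'l) \<Rightarrow> 'i set \<Rightarrow> bool" where
  "incongruent_vals y I \<longleftrightarrow> (\<forall>i\<in>I. y i \<noteq> 0)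
     \<and> (\<forall>i\<in>I. \<forall>j\<in>I. v (y i) mod (int p ^ n) = v (y j) mod (int p ^ n) \<longrightarrow> i = j)"

lemma incongruent_vals_terms_distinct:
  assumes y: "incongruent_vals y I" and c: "\<forall>i\<in>I. c i \<in> K"
    and "i \<in> I" "j \<in> I" "c i * y i \<noteq> 0" "c j * y j \<noteq> 0" "v (c i * y i) = v (c j * y j)"
  shows "i = j"
proof -
  have "v (y i) - v (y j) = v (c j) - v (c i)" using assms(5-7) by (simp add: v_mult)
  moreover have "int p ^ n dvd v (c j) - v (c i)"
    using assms(3-6) c by (intro dvd_diff v_K_dvd) auto
  ultimately have "v (y i) mod (int p ^ n) = v (y j) mod (int p ^ n)"
    by (simp add: mod_eq_dvd_iff)
  then show ?thesis using y assms(3,4) by (simp add: incongruent_vals_def)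
qed

lemma incongruent_vals_lin_indep:
  assumes "finite I" "incongruent_vals y I"
  shows "lin_indep K (*) y I"
  unfolding lin_indep_def
proof (intro allI impI ballI)
  fix c i assume c: "\<forall>i\<in>I. c i \<in> K" and sum: "(\<Sum>i\<in>I. c i * y i) = 0" and i: "i \<in> I"
  have "c i * y i = 0"
    by (rule sum_distinct_vals_eq_0D[OF assms(1) _ sum i], rule incongruent_vals_terms_distinct[OF assms(2) c])
  then show "c i = 0" using assms(2) i by (simp add: incongruent_vals_def)
qed

lemma incongruent_vals_sum_pow_idealD:
  assumes "finite I" "incongruent_vals y I" "\<forall>i\<in>I. c i \<in> K"
    and "(\<Sum>i\<in>I. c i * y i) \<in> P m" "i \<in> I"
  shows "c i * y i \<in> P m"
  by (rule sum_distinct_vals_pow_idealD[OF assms(1) _ assms(4,5)],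
      rule incongruent_vals_terms_distinct[OF assms(2,3)])

lemma lam_incongruent: "incongruent_vals (\<lambda>j. lam (int j)) {..<p ^ n}"
proof -
  have "int j mod int p ^ n = int j" if "j < p ^ n" for j
    using that by (intro mod_pos_pos_trivial) (simp_all flip: of_nat_power)
  then show ?thesis unfolding incongruent_vals_def by (simp add: lam_nonzero v_lam)
qed

lemma lam_basis: "basis_over K (*) (\<lambda>j. lam (int j)) {..<p ^ n}"
  using degree lin_indep_basis_over[OF K_subfield module_L _ incongruent_vals_lin_indep[OF _ lam_incongruent]]
  by blast

lemma lam_expansion:
  assumes "x \<in> P m"
  obtains c where "\<forall>j<p ^ n. c j \<in> K" "x = (\<Sum>j<p ^ n. c j * lam (int j))"
    "\<forall>j<p ^ n. c j * lam (int j) \<in> P m"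
proof -
  obtain c where c: "\<forall>j\<in>{..<p ^ n}. c j \<in> K" "x = (\<Sum>j\<in>{..<p ^ n}. c j * lam (int j))"
    using basis_over_represent[OF K_subfield module_L lam_basis] by metis
  then have "\<forall>j<p ^ n. c j * lam (int j) \<in> P m"
    using assms by (auto intro: incongruent_vals_sum_pow_idealD[OF _ lam_incongruent])
  with c that show ?thesis by auto
qed

text \<open>The leading term is the unique term of minimal valuation in the \<lambda>-expansion.\<close>

lemma leading_term:
  assumes x: "x \<noteq> 0"
  shows "\<exists>u\<in>val_units K v. x - u * lam (v x) \<in> P (v x + 1)"
proof -
  have "x \<in> P (v x)" by (simp add: pow_ideal_def)
  then obtain c where cK: "\<forall>j<p ^ n. c j \<in> K" and x_eq: "x = (\<Sum>j<p ^ n. c j * lam (int j))"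
    and terms: "\<forall>j<p ^ n. c j * lam (int j) \<in> P (v x)"
    by (rule lam_expansion)
  let ?y = "\<lambda>j. c j * lam (int j)"
  have "\<not> (\<forall>j<p ^ n. ?y j \<in> P (v x + 1))"
  proof
    assume "\<forall>j<p ^ n. ?y j \<in> P (v x + 1)"
    then have "x \<in> P (v x + 1)" unfolding x_eq by (intro pow_ideal_sum) simp
    then show False using x by (simp add: pow_ideal_def)
  qed
  then obtain j0 where j0: "j0 < p ^ n" "?y j0 \<notin> P (v x + 1)" by blast
  then have y_j0: "?y j0 \<noteq> 0" "v (?y j0) = v x"
    using terms by (auto simp: pow_ideal_def)
  have "?y j \<in> P (v x + 1)" if j: "j \<in> {..<p ^ n} - {j0}" for j
  proof (cases "?y j = 0")
    case False
    then have "v (?y j) \<noteq> v x"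
      using j y_j0 incongruent_vals_terms_distinct[OF lam_incongruent, of c j j0] cK j0(1) by auto
    then show ?thesis using j terms by (auto simp: pow_ideal_def)
  qed (simp add: pow_ideal_def)
  moreover have "x - ?y j0 = (\<Sum>j\<in>{..<p ^ n} - {j0}. ?y j)"
    using j0(1) by (simp add: x_eq sum.remove)
  ultimately have "x - ?y j0 \<in> P (v x + 1)" by (auto intro!: pow_ideal_sum)
  moreover obtain u where "u \<in> val_units K v" "?y j0 = u * lam (v x)"
    using K_mult_lam[of "c j0" "int j0"] cK j0(1) y_j0 by (auto simp: v_mult lam_nonzero v_lam)
  ultimately show ?thesis by auto
qed


lemma cong_tol_imp_pow_ideal: "cong_tol v T t x y \<Longrightarrow> x - y \<in> P (t + 1)"
  using tolerance by (auto simp: cong_tol_def pow_ideal_def one_enat_def)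

lemma Psi_lam:
  fixes t :: int
  assumes i: "i \<in> {1..n}"
  defines "t' \<equiv> t + int p ^ (n - i) * b i"
  shows "digit p (a_fun p n b t) (n - i) \<ge> 1 \<Longrightarrow>
           \<exists>u\<in>val_units K v. act (Psi i) (lam t) - u * lam t' \<in> P (t' + 1)"
    and "act (Psi i) (lam t) \<in> P t'"
proof -
  have "\<exists>u\<in>val_units K v. if digit p (a_fun p n b t) (n - i) \<ge> 1
      then cong_tol v T t' (act (Psi i) (lam t)) (u * lam t')
      else cong_tol v T t' (act (Psi i) (lam t)) 0"
    using scaffold i unfolding is_scaffold_def Let_def t'_def by blast
  then obtain u where u: "u \<in> val_units K v" and H:
    "if digit p (a_fun p n b t) (n - i) \<ge> 1
     then act (Psi i) (lam t) - u * lam t' \<in> P (t' + 1)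
     else act (Psi i) (lam t) \<in> P (t' + 1)"
    using cong_tol_imp_pow_ideal by (metis diff_zero)
  then show "digit p (a_fun p n b t) (n - i) \<ge> 1 \<Longrightarrow>
      \<exists>u\<in>val_units K v. act (Psi i) (lam t) - u * lam t' \<in> P (t' + 1)"
    by auto
  have "u * lam t' \<in> P t'"
    using u by (simp add: pow_ideal_def unit_iff v_mult lam_nonzero v_lam)
  moreover have "act (Psi i) (lam t) - u * lam t' \<in> P t' \<or> act (Psi i) (lam t) \<in> P t'"
    using H pow_ideal_mono[of _ "t' + 1" t'] by (simp split: if_splits)
  ultimately show "act (Psi i) (lam t) \<in> P t'"
    using pow_ideal_add[of "act (Psi i) (lam t) - u * lam t'" t' "u * lam t'"] by auto
qed

definition shifts_val :: "'a \<Rightarrow> int \<Rightarrow> bool" where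
  "shifts_val \<alpha> \<sigma> \<longleftrightarrow> (\<forall>m x. x \<in> P m \<longrightarrow> act \<alpha> x \<in> P (m + \<sigma>))"

lemma shifts_val_if_lam:
  assumes lam: "\<And>t. act \<alpha> (lam t) \<in> P (t + \<sigma>)"
  shows "shifts_val \<alpha> \<sigma>"
  unfolding shifts_val_def
proof (intro allI impI)
  fix m x assume "x \<in> P m"
  then obtain c where cK: "\<forall>j<p ^ n. c j \<in> K" and x: "x = (\<Sum>j<p ^ n. c j * lam (int j))"
    and terms: "\<forall>j<p ^ n. c j * lam (int j) \<in> P m"
    by (rule lam_expansion)
  have "act \<alpha> (c j * lam (int j)) \<in> P (m + \<sigma>)" if j: "j < p ^ n" for j
  proof (cases "c j = 0")
    case False
    moreover have "c j * lam (int j) \<in> P m" using terms j by simp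
    ultimately have "m \<le> v (c j) + int j" by (simp add: pow_ideal_def v_mult lam_nonzero v_lam)
    moreover have "c j * act \<alpha> (lam (int j)) \<in> P (v (c j) + (int j + \<sigma>))"
      by (intro pow_ideal_mult lam) (simp add: pow_ideal_def)
    ultimately show ?thesis using cK j by (simp add: act_scalar) (auto intro: pow_ideal_mono)
  qed (simp add: act_zero_right)
  then show "act \<alpha> x \<in> P (m + \<sigma>)" unfolding x act_sum_right by (auto intro: pow_ideal_sum)
qed

lemma shifts_val_mult: "shifts_val \<alpha> \<sigma> \<Longrightarrow> shifts_val \<beta> \<tau> \<Longrightarrow> shifts_val (\<alpha> * \<beta>) (\<tau> + \<sigma>)"
  unfolding shifts_val_def act_mult by (metis add.assoc)

lemma shifts_val_power: "shifts_val \<alpha> \<sigma> \<Longrightarrow> shifts_val (\<alpha> ^ k) (int k * \<sigma>)"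
proof (induction k)
  case 0
  then show ?case by (simp add: shifts_val_def act_one)
next
  case (Suc k)
  then have "shifts_val (\<alpha> * \<alpha> ^ k) (int k * \<sigma> + \<sigma>)" by (intro shifts_val_mult)
  then show ?case by (simp add: algebra_simps)
qed

lemma Psi_shifts_val: "i \<in> {1..n} \<Longrightarrow> shifts_val (Psi i) (int p ^ (n - i) * b i)"
  using Psi_lam(2) by (intro shifts_val_if_lam) simp

lemma Psi_prod_shifts_val:
  "set js \<subseteq> {..<n} \<Longrightarrow> shifts_val (prod_list (map (\<lambda>j. Psi (n - j) ^ d j) js))
      (\<Sum>j\<leftarrow>js. int (d j) * int p ^ j * b (n - j))"
proof (induction js)
  case Nil
  then show ?case by (simp add: shifts_val_def act_one)
next
  case (Cons j js)
  then have "n - j \<in> {1..n}" "n - (n - j) = j" by auto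
  then have "shifts_val (Psi (n - j) ^ d j) (int (d j) * int p ^ j * b (n - j))"
    using shifts_val_power[OF Psi_shifts_val] by (metis mult.assoc)
  with Cons show ?case by (auto dest: shifts_val_mult simp: add.commute)
qed

lemma Psi_pow_shifts_val: "shifts_val (Psi_pow p n Psi s) (shift_b p n b s)"
proof -
  have "(\<Sum>j\<leftarrow>[0..<n]. int (digit p s j) * int p ^ j * b (n - j)) = shift_b p n b s"
    by (simp add: shift_b_eq_digit_shift digit_shift_def sum_set_upt_conv_sum_list_nat[symmetric]
        atLeast0LessThan)
  then show ?thesis
    using Psi_prod_shifts_val[of "[0..<n]" "digit p s"] by (simp add: Psi_pow_def atLeast0LessThan)
qed

text \<open>While the relevant digit of a(t) is nonzero, \<Psi>_i shifts the valuation of any element of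
  valuation t exactly by p^(n-i) b_i: on the leading term this is the scaffold congruence, and the
  rest, lying in P(t + 1), is shifted at least as much.\<close>

lemma Psi_val:
  assumes i: "i \<in> {1..n}" and digit: "digit p (a_fun p n b t) (n - i) \<ge> 1"
    and x: "x \<noteq> 0" "v x = t"
  shows "act (Psi i) x \<noteq> 0 \<and> v (act (Psi i) x) = t + int p ^ (n - i) * b i"
proof -
  let ?t' = "t + int p ^ (n - i) * b i"
  obtain u where u: "u \<in> val_units K v" and e: "x - u * lam t \<in> P (t + 1)"
    using leading_term[OF x(1)] x(2) by blast
  obtain u0 where u0: "u0 \<in> val_units K v" and d: "act (Psi i) (lam t) - u0 * lam ?t' \<in> P (?t' + 1)"
    using Psi_lam(1)[OF i digit] by blast
  have uK: "u \<in> K" using u by (simp add: unit_iff)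
  define rest where "rest = u * (act (Psi i) (lam t) - u0 * lam ?t') + act (Psi i) (x - u * lam t)"
  have "act (Psi i) x = u * act (Psi i) (lam t) + act (Psi i) (x - u * lam t)"
    using act_add_right[of "Psi i" "u * lam t" "x - u * lam t"] act_scalar[OF uK] by simp
  then have eq: "act (Psi i) x = (u * u0) * lam ?t' + rest"
    by (simp add: rest_def algebra_simps)
  have "u * (act (Psi i) (lam t) - u0 * lam ?t') \<in> P (0 + (?t' + 1))"
    using u d by (intro pow_ideal_mult) (simp_all add: unit_iff pow_ideal_def)
  moreover have "act (Psi i) (x - u * lam t) \<in> P (t + 1 + int p ^ (n - i) * b i)"
    using Psi_shifts_val[OF i] e by (simp add: shifts_val_def)
  ultimately have "rest \<in> P (?t' + 1)"
    unfolding rest_def by (intro pow_ideal_add) (simp_all add: algebra_simps)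
  then show ?thesis
    using v_add_higher[of "(u * u0) * lam ?t'"] unit_mult_lam[OF units_mult[OF u u0]] eq by simp
qed

lemma Psi_power_val:
  assumes j: "j < n" and k: "k \<le> digit p (a_fun p n b t) j" and x: "x \<noteq> 0" "v x = t"
  shows "act (Psi (n - j) ^ k) x \<noteq> 0 \<and> v (act (Psi (n - j) ^ k) x) = t + int k * int p ^ j * b (n - j)"
  using k
proof (induction k)
  case 0
  then show ?case using x by (simp add: act_one)
next
  case (Suc k)
  let ?d = "\<lambda>i. if i = j then k else 0"
  have "digit p (a_fun p n b (t + digit_shift p n b ?d)) j = digit p (a_fun p n b t) j - k"
    using digit_a_fun_add_digit_shift[of ?d t j] Suc.prems j by simp
  then have "digit p (a_fun p n b (t + int k * int p ^ j * b (n - j))) (n - (n - j)) \<ge> 1"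
    using Suc.prems j by (simp add: digit_shift_single)
  moreover have "n - j \<in> {1..n}" using j by auto
  ultimately show ?case
    using Psi_val[of "n - j"] Suc j by (simp add: act_mult algebra_simps)
qed

lemma Psi_prod_val:
  assumes "set js \<subseteq> {..<n}" "distinct js" "\<forall>j\<in>set js. d j \<le> digit p (a_fun p n b t) j"
    and x: "x \<noteq> 0" "v x = t"
  shows "act (prod_list (map (\<lambda>j. Psi (n - j) ^ d j) js)) x \<noteq> 0
    \<and> v (act (prod_list (map (\<lambda>j. Psi (n - j) ^ d j) js)) x)
        = t + digit_shift p n b (\<lambda>j. if j \<in> set js then d j else 0)"
  using assms(1-3)
proof (induction js)
  case Nil
  then show ?case using x by (simp add: act_one digit_shift_def)
next
  case (Cons j js)
  let ?d = "\<lambda>i. if i \<in> set js then d i else 0"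
  let ?t = "t + digit_shift p n b ?d"
  have j: "j < n" "j \<notin> set js" using Cons.prems by auto
  have "digit p (a_fun p n b ?t) j = digit p (a_fun p n b t) j"
    using digit_a_fun_add_digit_shift[of ?d t j] Cons.prems j by auto
  then have dj: "d j \<le> digit p (a_fun p n b ?t) j" using Cons.prems by simp
  have "(\<lambda>i. if i \<in> set (j # js) then d i else 0) = (\<lambda>i. ?d i + (if i = j then d j else 0))"
    using j(2) by auto
  then have "digit_shift p n b (\<lambda>i. if i \<in> set (j # js) then d i else 0)
      = digit_shift p n b ?d + int (d j) * int p ^ j * b (n - j)"
    by (simp only: digit_shift_add digit_shift_single[OF j(1)])
  with dj show ?case
    using Psi_power_val[OF j(1)] Cons by (simp add: act_mult algebra_simps)
qed

lemma Psi_pow_val: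
  assumes "\<forall>j<n. digit p s j \<le> digit p (a_fun p n b t) j" and "x \<noteq> 0" "v x = t"
  shows "act (Psi_pow p n Psi s) x \<noteq> 0 \<and> v (act (Psi_pow p n Psi s) x) = t + shift_b p n b s"
proof -
  have "digit_shift p n b (\<lambda>j. if j \<in> set [0..<n] then digit p s j else 0) = shift_b p n b s"
    by (simp add: shift_b_eq_digit_shift cong: digit_shift_cong)
  then show ?thesis
    using Psi_prod_val[of "[0..<n]" "digit p s" t x] assms by (simp add: Psi_pow_def atLeast0LessThan)
qed


lemma Psi_pow_val_top:
  assumes "a_fun p n b t = p ^ n - 1" and "x \<noteq> 0" "v x = t"
  shows "act (Psi_pow p n Psi s) x \<noteq> 0 \<and> v (act (Psi_pow p n Psi s) x) = t + shift_b p n b s"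
proof (rule Psi_pow_val[OF _ assms(2,3)])
  show "\<forall>j<n. digit p s j \<le> digit p (a_fun p n b t) j"
  proof (intro allI impI)
    fix j assume "j < n"
    then have "digit p (a_fun p n b t) j = p - 1" using assms(1) digit_power_minus_1[OF p_gt_1] by simp
    moreover have "digit p s j < p" using p_gt_1 by (simp add: digit_less)
    ultimately show "digit p s j \<le> digit p (a_fun p n b t) j" by simp
  qed
qed

lemma Psi_pow_orbit_incongruent:
  assumes "a_fun p n b t = p ^ n - 1" and "x \<noteq> 0" "v x = t"
  shows "incongruent_vals (\<lambda>s. act (Psi_pow p n Psi s) x) {..<p ^ n}"
  unfolding incongruent_vals_def
proof (intro conjI ballI impI)
  fix s s' assume s: "s \<in> {..<p ^ n}" "s' \<in> {..<p ^ n}"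
    and "v (act (Psi_pow p n Psi s) x) mod int p ^ n = v (act (Psi_pow p n Psi s') x) mod int p ^ n"
  then have "(t + shift_b p n b s) mod int p ^ n = (t + shift_b p n b s') mod int p ^ n"
    using Psi_pow_val_top[OF assms] by simp
  then have "shift_b p n b s mod int p ^ n = shift_b p n b s' mod int p ^ n"
    by (simp add: mod_eq_dvd_iff)
  then show "s = s'" using s shift_b_cong_imp_eq by simp
qed (use Psi_pow_val_top[OF assms] in simp)

lemma lin_indep_if_orbit_lin_indep:
  assumes "lin_indep K (*) (\<lambda>i. act (f i) x) I"
  shows "lin_indep K (\<lambda>k \<alpha>. \<iota> k * \<alpha>) f I"
  unfolding lin_indep_def
proof (intro allI impI)
  fix c assume c: "\<forall>i\<in>I. c i \<in> K" and "(\<Sum>i\<in>I. \<iota> (c i) * f i) = 0"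
  then have "(\<Sum>i\<in>I. c i * act (f i) x) = 0" by (simp add: act_combination[symmetric] act_zero_left)
  then show "\<forall>i\<in>I. c i = 0" using assms c unfolding lin_indep_def by blast
qed

lemma Psi_pow_basis: "basis_over K (\<lambda>k \<alpha>. \<iota> k * \<alpha>) (Psi_pow p n Psi) {..<p ^ n}"
proof -
  obtain t where t: "a_fun p n b t = p ^ n - 1" using a_fun_eq_top_above by blast
  have "lin_indep K (*) (\<lambda>s. act (Psi_pow p n Psi s) (lam t)) {..<p ^ n}"
    using Psi_pow_orbit_incongruent[OF t lam_nonzero v_lam] by (intro incongruent_vals_lin_indep) auto
  then show ?thesis
    using A_dim lin_indep_basis_over[OF K_subfield module_A] lin_indep_if_orbit_lin_indep by blast
qed

abbreviation Psi_coord :: "'a \<Rightarrow> nat \<Rightarrow> 'l" where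
  "Psi_coord \<equiv> coord K (\<lambda>k \<alpha>. \<iota> k * \<alpha>) (Psi_pow p n Psi) {..<p ^ n}"

lemma act_eq_Psi_coord_combination:
  "act \<alpha> x = (\<Sum>s<p ^ n. Psi_coord \<alpha> s * act (Psi_pow p n Psi s) x)"
proof -
  have "act \<alpha> x = act (\<Sum>s<p ^ n. \<iota> (Psi_coord \<alpha> s) * Psi_pow p n Psi s) x"
    using coord_spec[OF K_subfield module_A Psi_pow_basis, of \<alpha>] by simp
  also have "\<dots> = (\<Sum>s<p ^ n. Psi_coord \<alpha> s * act (Psi_pow p n Psi s) x)"
    using coord_in_subfield[OF K_subfield module_A Psi_pow_basis] by (simp add: act_combination)
  finally show ?thesis .
qed

lemma free_generator:
  assumes top: "a_fun p n b t = p ^ n - 1" and \<rho>: "\<rho> \<noteq> 0" "v \<rho> = t"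
  shows "\<exists>!\<alpha>. act \<alpha> \<rho> = x"
proof -
  let ?Y = "\<lambda>s. act (Psi_pow p n Psi s) \<rho>"
  note coord = coord_spec[OF K_subfield module_A Psi_pow_basis]
  have Y: "lin_indep K (*) ?Y {..<p ^ n}"
    using Psi_pow_orbit_incongruent[OF top \<rho>] by (intro incongruent_vals_lin_indep) auto
  then have "basis_over K (*) ?Y {..<p ^ n}"
    using degree lin_indep_basis_over[OF K_subfield module_L] by blast
  then obtain c where c: "\<forall>s\<in>{..<p ^ n}. c s \<in> K" "x = (\<Sum>s\<in>{..<p ^ n}. c s * ?Y s)"
    by (rule basis_over_represent[OF K_subfield module_L]) blast
  then have "act (\<Sum>s<p ^ n. \<iota> (c s) * Psi_pow p n Psi s) \<rho> = x"
    by (simp add: act_combination)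
  moreover have "\<alpha> = \<beta>" if "act \<alpha> \<rho> = act \<beta> \<rho>" for \<alpha> \<beta>
  proof -
    have "(\<Sum>s<p ^ n. Psi_coord \<alpha> s * ?Y s) = (\<Sum>s<p ^ n. Psi_coord \<beta> s * ?Y s)"
      using that by (simp only: act_eq_Psi_coord_combination[symmetric])
    then have "\<forall>s\<in>{..<p ^ n}. Psi_coord \<alpha> s = Psi_coord \<beta> s"
      by (rule lin_indep_coeffs_unique[OF K_subfield module_L Y, rotated 2])
        (simp_all add: coord_in_subfield[OF K_subfield module_A Psi_pow_basis])
    moreover have "Psi_coord \<gamma> s = 0" if "s \<notin> {..<p ^ n}" for \<gamma> s
      using coord[of \<gamma>] that by blast
    ultimately have "Psi_coord \<alpha> = Psi_coord \<beta>" by fastforce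
    have "\<alpha> = (\<Sum>s<p ^ n. \<iota> (Psi_coord \<alpha> s) * Psi_pow p n Psi s)"
      using coord[of \<alpha>] by blast
    also have "\<dots> = \<beta>" unfolding \<open>Psi_coord \<alpha> = Psi_coord \<beta>\<close> using coord[of \<beta>] by (rule sym[OF conjunct2[OF conjunct2]])
    finally show ?thesis .
  qed
  ultimately show ?thesis by blast
qed


lemma assoc_order_iff: "\<alpha> \<in> assoc_order act v h \<longleftrightarrow> (\<forall>x\<in>P h. act \<alpha> x \<in> P h)"
  by (simp add: assoc_order_def)

lemma assoc_order_0: "0 \<in> assoc_order act v h"
  and assoc_order_1: "1 \<in> assoc_order act v h"
  and assoc_order_add: "\<alpha> \<in> assoc_order act v h \<Longrightarrow> \<beta> \<in> assoc_order act v h \<Longrightarrow> \<alpha> + \<beta> \<in> assoc_order act v h"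
  and assoc_order_mult: "\<alpha> \<in> assoc_order act v h \<Longrightarrow> \<beta> \<in> assoc_order act v h \<Longrightarrow> \<alpha> * \<beta> \<in> assoc_order act v h"
  and assoc_order_uminus: "\<alpha> \<in> assoc_order act v h \<Longrightarrow> - \<alpha> \<in> assoc_order act v h"
  by (simp_all add: assoc_order_iff act_zero_left act_one act_add_left act_mult act_uminus_left
      pow_ideal_add pow_ideal_uminus)

lemma assoc_order_scale:
  assumes "c \<in> val_ring K v" "\<alpha> \<in> assoc_order act v h"
  shows "\<iota> c * \<alpha> \<in> assoc_order act v h"
  unfolding assoc_order_iff
proof
  fix x assume "x \<in> P h"
  then have "c * act \<alpha> x \<in> P (0 + h)"
    using assms by (intro pow_ideal_mult) (auto simp: val_ring_def assoc_order_iff)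
  then show "act (\<iota> c * \<alpha>) x \<in> P h" using assms(1) by (simp add: act_mult act_iota val_ring_def)
qed

text \<open>Testing an element of the order on \<lambda>_{h'} with a(h') = p^n - 1 bounds its coordinates:
  the images of \<lambda>_{h'} under the \<Psi>^(s) have incongruent valuations h' + shift_b s.\<close>

lemma assoc_order_coord_bound:
  assumes \<alpha>: "\<alpha> \<in> assoc_order act v h" and h': "h \<le> h'" "a_fun p n b h' = p ^ n - 1"
    and s: "s < p ^ n" and nz: "Psi_coord \<alpha> s \<noteq> 0"
  shows "h - h' - shift_b p n b s \<le> v (Psi_coord \<alpha> s)"
proof -
  let ?Y = "\<lambda>s. act (Psi_pow p n Psi s) (lam h')"
  have "lam h' \<in> P h" using h'(1) by (simp add: pow_ideal_def v_lam)
  then have "(\<Sum>s<p ^ n. Psi_coord \<alpha> s * ?Y s) \<in> P h"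
    using \<alpha> by (simp add: assoc_order_iff act_eq_Psi_coord_combination[symmetric])
  then have "Psi_coord \<alpha> s * ?Y s \<in> P h"
    using Psi_pow_orbit_incongruent[OF h'(2) lam_nonzero v_lam] s
      coord_in_subfield[OF K_subfield module_A Psi_pow_basis]
    by (intro incongruent_vals_sum_pow_idealD) auto
  then show ?thesis
    using nz Psi_pow_val_top[OF h'(2) lam_nonzero v_lam, of s] by (simp add: pow_ideal_def v_mult)
qed

lemma assoc_order_finitely_generated:
  "\<exists>F. finite F \<and> F \<subseteq> assoc_order act v h
     \<and> assoc_order act v h = O_span K v (\<lambda>k \<alpha>. \<iota> k * \<alpha>) F"
proof -
  obtain h' where h': "h \<le> h'" "a_fun p n b h' = p ^ n - 1" using a_fun_eq_top_above by blast
  show ?thesis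
    using assoc_order_coord_bound[OF _ h']
    by (intro bounded_lattice_finitely_generated[OF K_subfield module_A Psi_pow_basis, where
          L = "\<lambda>s. h - h' - shift_b p n b s"] assoc_order_0 assoc_order_add assoc_order_scale)
qed

text \<open>Scaling \<Psi>^(s) by an element of K of valuation p^n |shift_b s| compensates its shift.\<close>

lemma assoc_order_contains_basis:
  "\<exists>e. basis_over K (\<lambda>k \<alpha>. \<iota> k * \<alpha>) e {..<p ^ n} \<and> e ` {..<p ^ n} \<subseteq> assoc_order act v h"
proof -
  have "\<forall>s. \<exists>k\<in>K. k \<noteq> 0 \<and> v k = int p ^ n * \<bar>shift_b p n b s\<bar>"
    using exists_K_val by blast
  then obtain k where k: "\<And>s. k s \<in> K \<and> k s \<noteq> 0 \<and> v (k s) = int p ^ n * \<bar>shift_b p n b s\<bar>"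
    by metis
  have "\<iota> (k s) * Psi_pow p n Psi s \<in> assoc_order act v h" for s
    unfolding assoc_order_iff
  proof
    fix x assume "x \<in> P h"
    then have "k s * act (Psi_pow p n Psi s) x \<in> P (int p ^ n * \<bar>shift_b p n b s\<bar> + (h + shift_b p n b s))"
      using Psi_pow_shifts_val k[of s] by (intro pow_ideal_mult) (auto simp: shifts_val_def pow_ideal_def)
    moreover have "\<bar>shift_b p n b s\<bar> \<le> int p ^ n * \<bar>shift_b p n b s\<bar>"
      using p_gt_1 by (simp add: mult_le_cancel_right1)
    ultimately show "act (\<iota> (k s) * Psi_pow p n Psi s) x \<in> P h"
      using k[of s] by (simp add: act_mult act_iota) (auto elim: pow_ideal_mono)
  qed
  moreover have "basis_over K (\<lambda>k \<alpha>. \<iota> k * \<alpha>) (\<lambda>s. \<iota> (k s) * Psi_pow p n Psi s) {..<p ^ n}"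
    using k by (intro basis_over_rescale[OF K_subfield module_A Psi_pow_basis]) auto
  ultimately show ?thesis by blast
qed

lemma assoc_order_is_OK_order: "is_OK_order K v \<iota> (assoc_order act v h)"
  unfolding is_OK_order_def
proof (intro conjI ballI)
  show "\<exists>F. finite F \<and> F \<subseteq> assoc_order act v h \<and> assoc_order act v h
      = {\<Sum>f\<in>F. \<iota> (c f) * f | c. \<forall>f\<in>F. c f \<in> val_ring K v}"
    using assoc_order_finitely_generated by (simp add: O_span_def)
  show "\<exists>(e::nat \<Rightarrow> 'a) I. basis_over K (\<lambda>k \<alpha>. \<iota> k * \<alpha>) e I \<and> e ` I \<subseteq> assoc_order act v h"
    using assoc_order_contains_basis by blast
qed (simp_all add: assoc_order_0 assoc_order_1 assoc_order_add assoc_order_mult assoc_order_uminus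
    assoc_order_scale)

end

theorem proposition2p9:
  fixes K :: "'l::field set" and v :: "'l \<Rightarrow> int"
    and \<iota> :: "'l \<Rightarrow> 'a::ring_1" and act :: "'a \<Rightarrow> 'l \<Rightarrow> 'l"
    and p n :: nat and b :: "nat \<Rightarrow> int" and T :: enat
    and lam :: "int \<Rightarrow> 'l" and Psi :: "nat \<Rightarrow> 'a"
    and b' :: int and \<rho> :: 'l
  assumes prime_p: "prime p"
    and K_subfield: "subfield_of K"
    and val: "normalized_discrete_valuation v"
    and K_complete: "complete_wrt K v"
    and residue_char: "of_nat p \<in> pow_ideal v 1"
    and degree: "\<exists>e::nat \<Rightarrow> 'l. basis_over K (*) e {..<p ^ n}"
    and totally_ramified: "{v x | x. x \<in> K \<and> x \<noteq> 0} = {int p ^ n * z | z. True}"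
    and A_alg: "K_algebra K \<iota>"
    and A_dim: "\<exists>e::nat \<Rightarrow> 'a. basis_over K (\<lambda>k a. \<iota> k * a) e {..<p ^ n}"
    and action: "alg_action K \<iota> act"
    and scaffold: "is_scaffold K v act p n b T lam Psi"
    and b'_def: "a_fun p n b b' = p ^ n - 1"
    and rho: "\<rho> \<noteq> 0" "v \<rho> = b'"
  shows "basis_over K (\<lambda>k a. \<iota> k * a) (Psi_pow p n Psi) {..<p ^ n}
       \<and> (\<forall>x. \<exists>!\<alpha>. act \<alpha> \<rho> = x)
       \<and> (\<forall>h. is_OK_order K v \<iota> (assoc_order act v h))"
proof -
  interpret scaffold_setting v K \<iota> act p n b T lam Psi
    by unfold_locales (fact val prime_p K_subfield degree totally_ramified A_alg A_dim action scaffold)+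
  show ?thesis
    using Psi_pow_basis free_generator[OF b'_def rho] assoc_order_is_OK_order by blast
qed

end
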